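(* Let $1<\alpha<2$, $\varepsilon>0$, $\beta>0$, $f$ Lipschitz continuous, $u_0\in L^2(\Omega)$ with $\Omega=[a,b]$, and let $(u_h,p_h,q_h)$ be the solution of the semi-discrete LDG scheme described in the context. Then the scheme is stable in the sense that for every $T>0$, $$\|u_h(\cdot,T)\|_{L^2(\Omega)}\le\|u_0\|_{L^2(\Omega)}.$$
   Context: Setting: the fractional convection–diffusion problem $u_t+f(u)_x=\varepsilon\big(-(-\Delta)^{\alpha/2}\big)u$, $u(\cdot,0)=u_0$, is posed on $\Omega=[a,b]$ with homogeneous Dirichlet data ($u=0$ outside $\Omega$). For $1<\alpha<2$ define on $\Omega$ $$\Delta_{(\alpha-2)/2}p(x)=\frac{1}{2\cos\big((2-\alpha)\pi/2\big)\Gamma(2-\alpha)}\Big(\int_a^x(x-s)^{1-\alpha}p(s)\,ds+\int_x^b(s-x)^{1-\alpha}p(s)\,ds\Big).$$ Mesh: $a=x_{1/2}<\dots<x_{K+1/2}=b$, $I_i=[x_{i-1/2},x_{i+1/2}]$, mesh size $h$; $V_h=\{v:\ v|_{I_i}\in P^k(I_i)\ \forall i\}$ (polynomials of degree $\le k$ on each cell). For piecewise smooth $w$: $w^\pm_{j+1/2}=\lim_{x\to x_{j+1/2}^\pm}w(x)$, $\llbracket w\rrbracket=w^+-w^-$, and $(\cdot,\cdot)_{I_i}$ is the $L^2(I_i)$ inner product. Scheme: find $u_h(\cdot,t),p_h(\cdot,t),q_h(\cdot,t)\in V_h$ such that for every $i$ and all $v,w,z\in P^k(I_i)$: $((u_h)_t,v)_{I_i}+\big[(\hat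 f-\sqrt{\varepsilon}\hat q)v\big]_{x^+_{i-1/2}}^{x^-_{i+1/2}}-(f(u_h)-\sqrt{\varepsilon}q_h,v_x)_{I_i}=0$; $(q_h,w)_{I_i}-(\Delta_{(\alpha-2)/2}p_h,w)_{I_i}=0$; $(p_h,z)_{I_i}-\sqrt{\varepsilon}\big[\hat u z\big]_{x^+_{i-1/2}}^{x^-_{i+1/2}}+\sqrt{\varepsilon}(u_h,z_x)_{I_i}=0$; $(u_h(\cdot,0),v)_{I_i}=(u_0,v)_{I_i}$. Here $[g]_{x^+_{i-1/2}}^{x^-_{i+1/2}}=g(x^-_{i+1/2})-g(x^+_{i-1/2})$. Numerical fluxes: at interior nodes $1\le i\le K-1$, $\hat u_{i+1/2}=(u_h)^-_{i+1/2}$, $\hat q_{i+1/2}=(q_h)^+_{i+1/2}$, $\hat f_{i+1/2}=\hat f\big((u_h)^-_{i+1/2},(u_h)^+_{i+1/2}\big)$, where $\hat f$ is a monotone numerical flux (Lipschitz, consistent $\hat f(s,s)=f(s)$, nondecreasing in its first argument and nonincreasing in its second). At the boundary: $\hat u_{1/2}=0$, $\hat q_{1/2}=(q_h)^+_{1/2}$, $\hat u_{K+1/2}=0$, $\hat q_{K+1/2}=(q_h)^-_{K+1/2}+\frac{\beta}{h}\big(0-(u_h)^-_{K+1/2}\big)$, and $\hat f_{1/2}=\hat f(0,(u_h)^+_{1/2})$, $\hat f_{K+1/2}=\hat f((u_h)^-_{K+1/2},0)$. *)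

theory Defs
  imports "HOL-Analysis.Analysis" "HOL-Computational_Algebra.Polynomial"
begin

text \<open>Mesh: nodes xn 0 = a < xn 1 < ... < xn K = b, where xn j stands for x_{j+1/2}.
  Cell i (1 \<le> i \<le> K) is I_i = [xn (i-1), xn i].  An element of V_h is represented by
  its family of cell polynomials  P :: nat \<Rightarrow> real poly  (P i = restriction to I_i,
  of degree \<le> k).\<close>

definition mesh :: "real \<Rightarrow> real \<Rightarrow> nat \<Rightarrow> (nat \<Rightarrow> real) \<Rightarrow> bool" where
  "mesh a b K xn \<longleftrightarrow> K \<ge> 1 \<and> xn 0 = a \<and> xn K = b \<and> (\<forall>i\<in>{1..K}. xn (i-1) < xn i)"

definition mesh_size :: "nat \<Rightarrow> (nat \<Rightarrow> real) \<Rightarrow> real" where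
  "mesh_size K xn = Max ((\<lambda>i. xn i - xn (i-1)) ` {1..K})"

text \<open>The piecewise polynomial function on [a,b] determined by the cell polynomials
  (values at the finitely many nodes are irrelevant).\<close>
definition pw :: "(nat \<Rightarrow> real) \<Rightarrow> nat \<Rightarrow> (nat \<Rightarrow> real poly) \<Rightarrow> real \<Rightarrow> real" where
  "pw xn K P s = (\<Sum>i=1..K. if xn (i-1) \<le> s \<and> s < xn i then poly (P i) s else 0)"

definition cell_ip :: "(nat \<Rightarrow> real) \<Rightarrow> nat \<Rightarrow> (real \<Rightarrow> real) \<Rightarrow> (real \<Rightarrow> real) \<Rightarrow> real" where
  "cell_ip xn i g w = integral {xn (i-1)..xn i} (\<lambda>y. g y * w y)"

definition frac_op :: "real \<Rightarrow> real \<Rightarrow> real \<Rightarrow> (real \<Rightarrow> real) \<Rightarrow> real \<Rightarrow> real" where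
  "frac_op \<alpha> a b p x =
     1 / (2 * cos ((2 - \<alpha>) * pi / 2) * Gamma (2 - \<alpha>)) *
     (integral {a..x} (\<lambda>s. (x - s) powr (1 - \<alpha>) * p s) +
      integral {x..b} (\<lambda>s. (s - x) powr (1 - \<alpha>) * p s))"

definition monotone_flux :: "(real \<Rightarrow> real \<Rightarrow> real) \<Rightarrow> (real \<Rightarrow> real) \<Rightarrow> bool" where
  "monotone_flux F f \<longleftrightarrow>
     (\<exists>L. \<forall>u v u' v'. \<bar>F u v - F u' v'\<bar> \<le> L * (\<bar>u - u'\<bar> + \<bar>v - v'\<bar>)) \<and>
     (\<forall>s. F s s = f s) \<and>
     (\<forall>u u' v. u \<le> u' \<longrightarrow> F u v \<le> F u' v) \<and>
     (\<forall>u v v'. v \<le> v' \<longrightarrow> F u v' \<le> F u v)"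

definition uhat :: "(nat \<Rightarrow> real) \<Rightarrow> nat \<Rightarrow> (nat \<Rightarrow> real poly) \<Rightarrow> nat \<Rightarrow> real" where
  "uhat xn K U j = (if j = 0 \<or> j = K then 0 else poly (U j) (xn j))"

definition qhat :: "(nat \<Rightarrow> real) \<Rightarrow> nat \<Rightarrow> real \<Rightarrow> real \<Rightarrow> (nat \<Rightarrow> real poly) \<Rightarrow> (nat \<Rightarrow> real poly) \<Rightarrow> nat \<Rightarrow> real" where
  "qhat xn K \<beta> h U Q j =
     (if j = 0 then poly (Q 1) (xn 0)
      else if j = K then poly (Q K) (xn K) + \<beta> / h * (0 - poly (U K) (xn K))
      else poly (Q (j + 1)) (xn j))"

definition fhat :: "(real \<Rightarrow> real \<Rightarrow> real) \<Rightarrow> (nat \<Rightarrow> real) \<Rightarrow> nat \<Rightarrow> (nat \<Rightarrow> real poly) \<Rightarrow> nat \<Rightarrow> real" where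
  "fhat F xn K U j =
     (if j = 0 then F 0 (poly (U 1) (xn 0))
      else if j = K then F (poly (U K) (xn K)) 0
      else F (poly (U j) (xn j)) (poly (U (j + 1)) (xn j)))"

text \<open>(U, Ut, P, Q) is a solution of the semi-discrete LDG scheme on the time interval [0,T]:
  U t, P t, Q t are the cell polynomials of u_h(.,t), p_h(.,t), q_h(.,t), and Ut t those of
  the time derivative (u_h)_t(.,t).\<close>
definition ldg_solution ::
  "real \<Rightarrow> real \<Rightarrow> real \<Rightarrow> real \<Rightarrow> real \<Rightarrow> (real \<Rightarrow> real) \<Rightarrow> (real \<Rightarrow> real \<Rightarrow> real) \<Rightarrow>
   (real \<Rightarrow> real) \<Rightarrow> nat \<Rightarrow> (nat \<Rightarrow> real) \<Rightarrow> nat \<Rightarrow> real \<Rightarrow>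
   (real \<Rightarrow> nat \<Rightarrow> real poly) \<Rightarrow> (real \<Rightarrow> nat \<Rightarrow> real poly) \<Rightarrow>
   (real \<Rightarrow> nat \<Rightarrow> real poly) \<Rightarrow> (real \<Rightarrow> nat \<Rightarrow> real poly) \<Rightarrow> bool" where
  "ldg_solution a b \<alpha> \<epsilon> \<beta> f F u0 K xn k T U Ut P Q \<longleftrightarrow>
   (let h = mesh_size K xn in
    (\<forall>t\<in>{0..T}. \<forall>i\<in>{1..K}.
        degree (U t i) \<le> k \<and> degree (Ut t i) \<le> k \<and> degree (P t i) \<le> k \<and> degree (Q t i) \<le> k) \<and>
    (\<forall>t\<in>{0..T}. \<forall>i\<in>{1..K}. \<forall>y\<in>{xn (i-1)..xn i}.
        ((\<lambda>\<tau>. poly (U \<tau> i) y) has_real_derivative poly (Ut t i) y) (at t within {0..T})) \<and>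
    (\<forall>t\<in>{0..T}. \<forall>i\<in>{1..K}. \<forall>v w z :: real poly.
        degree v \<le> k \<longrightarrow> degree w \<le> k \<longrightarrow> degree z \<le> k \<longrightarrow>
        cell_ip xn i (poly (Ut t i)) (poly v)
          + ((fhat F xn K (U t) i - sqrt \<epsilon> * qhat xn K \<beta> h (U t) (Q t) i) * poly v (xn i)
             - (fhat F xn K (U t) (i-1) - sqrt \<epsilon> * qhat xn K \<beta> h (U t) (Q t) (i-1)) * poly v (xn (i-1)))
          - cell_ip xn i (\<lambda>y. f (poly (U t i) y) - sqrt \<epsilon> * poly (Q t i) y) (poly (pderiv v)) = 0
        \<and>
        cell_ip xn i (poly (Q t i)) (poly w)
          - cell_ip xn i (frac_op \<alpha> a b (pw xn K (P t))) (poly w) = 0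
        \<and>
        cell_ip xn i (poly (P t i)) (poly z)
          - sqrt \<epsilon> * (uhat xn K (U t) i * poly z (xn i) - uhat xn K (U t) (i-1) * poly z (xn (i-1)))
          + sqrt \<epsilon> * cell_ip xn i (poly (U t i)) (poly (pderiv z)) = 0) \<and>
    (\<forall>i\<in>{1..K}. \<forall>v :: real poly. degree v \<le> k \<longrightarrow>
        cell_ip xn i (poly (U 0 i)) (poly v) = cell_ip xn i u0 (poly v)))"

end

theory Submission
  imports Defs
begin

text \<open>Testing the three equations of the scheme with \<open>u\<^sub>h\<close>, \<open>p\<^sub>h\<close> and \<open>q\<^sub>h\<close> and summing over
  the cells expresses \<open>d/dt \<parallel>u\<^sub>h\<parallel>\<^sup>2 / 2\<close> as \<open>-(\<Delta>p\<^sub>h, p\<^sub>h)\<close> plus one term per node, where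
  \<open>\<Delta>\<close> is the operator \<open>frac_op\<close>. The node terms are nonpositive by the monotonicity of the
  numerical flux (and, at the right end, the penalty \<open>\<beta>/h\<close>). The fractional term is
  nonnegative: by the Gamma integral the kernel \<open>|x - s| powr (1 - \<alpha>)\<close> is a positive
  superposition of the kernels \<open>exp (-t |x - s|)\<close>, and the quadratic form of each of these
  splits into squares of one-sided primitives of \<open>g(s) exp (\<plusminus>t s)\<close>. Hence
  \<open>\<parallel>u\<^sub>h(T)\<parallel> \<le> \<parallel>u\<^sub>h(0)\<parallel> \<le> \<parallel>u\<^sub>0\<parallel>\<close>, the last step since \<open>u\<^sub>h(0)\<close> is the cellwise \<open>L\<^sup>2\<close>
  projection of \<open>u\<^sub>0\<close>.\<close>

lemma nn_integral_Gamma_Laplace: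
  fixes r \<gamma> :: real
  assumes r: "r > 0" and g: "\<gamma> > 0"
  shows "(\<integral>\<^sup>+t. ennreal (indicator {0..} t * t powr (\<gamma> - 1) * exp (- t * r)) \<partial>lborel)
         = ennreal (Gamma \<gamma> * r powr (-\<gamma>))"
proof -
  have "ennreal (Gamma \<gamma>) = (\<integral>\<^sup>+u. ennreal (indicator {0..} u * u powr (\<gamma> - 1) / exp u) \<partial>lborel)"
    using Gamma_conv_nn_integral_real[OF g] by simp
  also have "\<dots> = ennreal \<bar>r\<bar> * (\<integral>\<^sup>+x. ennreal (indicator {0..} (0 + r * x) * (0 + r*x) powr (\<gamma> - 1) / exp (0 + r*x)) \<partial>lborel)"
    by (rule nn_integral_real_affine) (use r in auto)
  also have "\<dots> = ennreal r * (\<integral>\<^sup>+x. ennreal (r powr (\<gamma> - 1)) * ennreal (indicator {0..} x * x powr (\<gamma> - 1) * exp (- x * r)) \<partial>lborel)"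
  proof -
    have "ennreal (indicator {0..} (0 + r * x) * (0 + r*x) powr (\<gamma> - 1) / exp (0 + r*x))
        = ennreal (r powr (\<gamma> - 1)) * ennreal (indicator {0..} x * x powr (\<gamma> - 1) * exp (- x * r))" for x
    proof (cases "x \<ge> 0")
      case True
      then show ?thesis using r
        by (simp add: ennreal_mult'[symmetric] powr_mult exp_minus field_simps zero_le_mult_iff indicator_def)
    next
      case False
      then show ?thesis using r by (simp add: indicator_def zero_le_mult_iff)
    qed
    then show ?thesis using r by simp
  qed
  also have "\<dots> = ennreal (r * r powr (\<gamma> - 1)) * (\<integral>\<^sup>+x. ennreal (indicator {0..} x * x powr (\<gamma> - 1) * exp (- x * r)) \<partial>lborel)"
    by (subst nn_integral_cmult) (use r in \<open>auto simp: ennreal_mult' mult.assoc\<close>)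
  finally have scaled: "ennreal (Gamma \<gamma>) = ennreal (r powr \<gamma>) * (\<integral>\<^sup>+x. ennreal (indicator {0..} x * x powr (\<gamma> - 1) * exp (- x * r)) \<partial>lborel)"
    using r by (simp add: powr_mult_base)
  have "(\<integral>\<^sup>+x. ennreal (indicator {0..} x * x powr (\<gamma> - 1) * exp (- x * r)) \<partial>lborel)
      = ennreal (r powr (-\<gamma>)) * (ennreal (r powr \<gamma>) * (\<integral>\<^sup>+x. ennreal (indicator {0..} x * x powr (\<gamma> - 1) * exp (- x * r)) \<partial>lborel))"
    using r by (simp add: mult.assoc[symmetric] ennreal_mult'[symmetric] powr_add[symmetric])
  also have "\<dots> = ennreal (Gamma \<gamma> * r powr (-\<gamma>))"
    using scaled[symmetric] r g by (simp add: ennreal_mult' mult.commute Gamma_real_pos less_imp_le)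
  finally show ?thesis by (simp add: mult.commute)
qed

lemma integral_Gamma_Laplace:
  fixes r \<gamma> :: real
  assumes r: "r > 0" and g: "\<gamma> > 0"
  shows "(\<integral>t. indicator {0..} t * t powr (\<gamma> - 1) * exp (- t * r) \<partial>lborel) = Gamma \<gamma> * r powr (-\<gamma>)"
proof -
  have "(\<integral>t. indicator {0..} t * t powr (\<gamma> - 1) * exp (- t * r) \<partial>lborel)
      = enn2real (\<integral>\<^sup>+t. ennreal (indicator {0..} t * t powr (\<gamma> - 1) * exp (- t * r)) \<partial>lborel)"
    by (rule integral_eq_nn_integral) (auto simp: indicator_def)
  also have "\<dots> = Gamma \<gamma> * r powr (-\<gamma>)"
    using nn_integral_Gamma_Laplace[OF r g] r g by (simp add: Gamma_real_pos less_imp_le)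
  finally show ?thesis .
qed

lemma abs_powr_has_integral:
  fixes d \<gamma> :: real
  assumes d: "d \<ge> 0" and g: "\<gamma> < 1"
  shows "((\<lambda>u. \<bar>u\<bar> powr (-\<gamma>)) has_integral 2 * (d powr (1 - \<gamma>) / (1 - \<gamma>))) {-d..d}"
proof -
  have pos: "((\<lambda>u. u powr (-\<gamma>)) has_integral (d powr (1 - \<gamma>) / (1 - \<gamma>))) {0..d}"
    using has_integral_powr_from_0[of "-\<gamma>" d] d g by simp
  have pos_abs: "((\<lambda>u. \<bar>u\<bar> powr (-\<gamma>)) has_integral (d powr (1 - \<gamma>) / (1 - \<gamma>))) {0..d}"
    by (rule has_integral_spike_finite[OF _ _ pos, of "{}"]) auto
  have neg: "((\<lambda>u. \<bar>u\<bar> powr (-\<gamma>)) has_integral (d powr (1 - \<gamma>) / (1 - \<gamma>))) {-d..0}"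
  proof -
    have "((\<lambda>x. \<bar>-x\<bar> powr (-\<gamma>)) has_integral (d powr (1 - \<gamma>) / (1 - \<gamma>))) {-d..-0}"
      using has_integral_reflect_real[of "\<lambda>u. \<bar>u\<bar> powr (-\<gamma>)", THEN iffD2, OF pos_abs] .
    then show ?thesis by (simp only: abs_minus_cancel minus_zero)
  qed
  have "((\<lambda>u. \<bar>u\<bar> powr (-\<gamma>)) has_integral ((d powr (1 - \<gamma>) / (1 - \<gamma>)) + (d powr (1 - \<gamma>) / (1 - \<gamma>)))) {-d..d}"
    by (rule has_integral_combine[OF _ _ neg pos_abs]) (use d in auto)
  then show ?thesis by (simp only: mult_2)
qed

lemma nn_integral_abs_powr_kernel_le:
  fixes a b x \<gamma> :: real
  assumes ab: "a \<le> b" and x: "x \<in> {a..b}" and g: "\<gamma> < 1"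
  shows "(\<integral>\<^sup>+s. ennreal (indicator {a..b} s * \<bar>x - s\<bar> powr (-\<gamma>)) \<partial>lborel)
         \<le> ennreal (2 * ((b - a) powr (1 - \<gamma>) / (1 - \<gamma>)))"
proof -
  define d where "d = b - a"
  have d: "d \<ge> 0" using ab by (simp add: d_def)
  have "(\<integral>\<^sup>+s. ennreal (indicator {a..b} s * \<bar>x - s\<bar> powr (-\<gamma>)) \<partial>lborel)
      \<le> (\<integral>\<^sup>+s. ennreal (indicator {x-d..x+d} s * \<bar>x - s\<bar> powr (-\<gamma>)) \<partial>lborel)"
    using x by (intro nn_integral_mono) (auto simp: indicator_def d_def)
  also have "\<dots> = ennreal \<bar>1\<bar> * (\<integral>\<^sup>+u. ennreal (indicator {x-d..x+d} (x + 1 * u) * \<bar>x - (x + 1 * u)\<bar> powr (-\<gamma>)) \<partial>lborel)"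
    by (rule nn_integral_real_affine) auto
  also have "\<dots> = (\<integral>\<^sup>+u. ennreal (indicator {-d..d} u * \<bar>u\<bar> powr (-\<gamma>)) \<partial>lborel)"
    by (simp add: indicator_def algebra_simps; intro nn_integral_cong; simp; linarith)
  also have "\<dots> = ennreal (2 * (d powr (1 - \<gamma>) / (1 - \<gamma>)))"
    by (rule nn_integral_has_integral_lebesgue[OF _ abs_powr_has_integral[OF d g]]) simp
  finally show ?thesis by (simp add: d_def)
qed

lemma abs_powr_kernel_integrable:
  fixes a b x \<gamma> :: real
  assumes ab: "a \<le> b" and x: "x \<in> {a..b}" and g: "\<gamma> < 1"
  shows "integrable lborel (\<lambda>s. indicator {a..b} s * \<bar>x - s\<bar> powr (-\<gamma>))"
proof (rule integrableI_bounded)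
  have "(\<integral>\<^sup>+s. ennreal (norm (indicator {a..b} s * \<bar>x - s\<bar> powr (-\<gamma>))) \<partial>lborel)
      = (\<integral>\<^sup>+s. ennreal (indicator {a..b} s * \<bar>x - s\<bar> powr (-\<gamma>)) \<partial>lborel)"
    by (intro nn_integral_cong) (auto simp: indicator_def)
  also have "\<dots> < \<infinity>" using nn_integral_abs_powr_kernel_le[OF assms] by (simp add: le_less_trans)
  finally show "(\<integral>\<^sup>+s. ennreal (norm (indicator {a..b} s * \<bar>x - s\<bar> powr (-\<gamma>))) \<partial>lborel) < \<infinity>" .
qed simp

lemma abs_powr_kernel_integral_le:
  fixes a b x \<gamma> :: real
  assumes ab: "a \<le> b" and x: "x \<in> {a..b}" and g: "\<gamma> < 1"
  shows "(\<integral>s. indicator {a..b} s * \<bar>x - s\<bar> powr (-\<gamma>) \<partial>lborel) \<le> 2 * ((b - a) powr (1 - \<gamma>) / (1 - \<gamma>))"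
proof -
  have "(\<integral>s. indicator {a..b} s * \<bar>x - s\<bar> powr (-\<gamma>) \<partial>lborel)
      = enn2real (\<integral>\<^sup>+s. ennreal (indicator {a..b} s * \<bar>x - s\<bar> powr (-\<gamma>)) \<partial>lborel)"
    by (rule integral_eq_nn_integral) (auto simp: indicator_def)
  also have "\<dots> \<le> 2 * ((b - a) powr (1 - \<gamma>) / (1 - \<gamma>))"
    using nn_integral_abs_powr_kernel_le[OF assms] g ab by (simp add: enn2real_leI)
  finally show ?thesis .
qed

lemma set_integrable_bounded_Icc:
  fixes h :: "real \<Rightarrow> real"
  assumes [measurable]: "h \<in> borel_measurable borel" and B: "\<And>x. x \<in> {c..d} \<Longrightarrow> \<bar>h x\<bar> \<le> B"
  shows "set_integrable lborel {c..d} h"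
  unfolding set_integrable_def
proof (rule integrableI_bounded_set[where A="{c..d}" and B=B])
  show "AE x in lborel. x \<in> {c..d} \<longrightarrow> norm (indicator {c..d} x *\<^sub>R h x) \<le> B"
    using B by (auto simp: indicator_def)
qed (auto simp: indicator_def emeasure_lborel_Icc_eq)

lemma integrable_on_bounded_Icc:
  fixes h :: "real \<Rightarrow> real"
  assumes "h \<in> borel_measurable borel" and "\<And>x. x \<in> {c..d} \<Longrightarrow> \<bar>h x\<bar> \<le> B"
  shows "h integrable_on {c..d}"
  using set_borel_integral_eq_integral(1)[OF set_integrable_bounded_Icc[OF assms]] .

lemma integral_bounded_Icc_eq:
  fixes h :: "real \<Rightarrow> real"
  assumes "h \<in> borel_measurable borel" and "\<And>x. x \<in> {c..d} \<Longrightarrow> \<bar>h x\<bar> \<le> B"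
  shows "(LINT x:{c..d}|lborel. h x) = integral {c..d} h"
  using set_borel_integral_eq_integral(2)[OF set_integrable_bounded_Icc[OF assms]] .

lemma abs_set_integral_bounded_Icc_le:
  fixes h :: "real \<Rightarrow> real"
  assumes h: "h \<in> borel_measurable borel" and B: "\<And>x. x \<in> {c..d} \<Longrightarrow> \<bar>h x\<bar> \<le> B" and cd: "c \<le> d"
  shows "\<bar>LINT x:{c..d}|lborel. h x\<bar> \<le> B * (d - c)"
proof -
  have "\<bar>LINT x:{c..d}|lborel. h x\<bar> \<le> (LINT x:{c..d}|lborel. \<bar>h x\<bar>)"
    using set_integral_norm_bound[OF set_integrable_bounded_Icc[OF h B]] by simp
  also have "\<dots> \<le> (LINT x:{c..d}|lborel. B)"
    using h B by (intro set_integral_mono set_integrable_bounded_Icc[where B=B] set_integrable_bounded_Icc[where B="\<bar>B\<bar>"]) auto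
  also have "\<dots> = B * (d - c)" using cd by (subst set_integral_const) (auto simp: emeasure_lborel_Icc_eq)
  finally show ?thesis .
qed

lemma indefinite_integral_has_real_derivative:
  fixes f :: "real \<Rightarrow> real"
  assumes f: "f integrable_on {a..b}" and fc: "isCont f x" and x: "x \<in> {a<..<b}"
  shows "((\<lambda>y. integral {a..y} f) has_real_derivative f x) (at x)"
proof -
  have "((\<lambda>y. integral {a..y} f) has_vector_derivative f x) (at x within ({a..b} - {}))"
    by (rule integral_has_vector_derivative_continuous_at[OF f])
       (use x fc in \<open>auto intro: continuous_at_imp_continuous_within\<close>)
  then show ?thesis
    using x by (simp add: at_within_Icc_at has_real_derivative_iff_has_vector_derivative)
qed

lemma has_integral_exp_weighted_primitive:
  fixes W w :: "real \<Rightarrow> real" and c :: real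
  assumes S: "finite S" and ab: "a \<le> b" and Wc: "continuous_on {a..b} W"
    and Wd: "\<And>x. x \<in> {a<..<b} - S \<Longrightarrow> (W has_real_derivative w x) (at x)"
  shows "((\<lambda>x. exp (c * x) * W x * w x) has_integral
           exp (c * b) * (W b)\<^sup>2 / 2 - exp (c * a) * (W a)\<^sup>2 / 2
           - c / 2 * integral {a..b} (\<lambda>x. exp (c * x) * (W x)\<^sup>2)) {a..b}"
proof -
  define \<Phi> where "\<Phi> x = exp (c * x) * (W x)\<^sup>2 / 2" for x
  have "((\<lambda>x. c / 2 * (exp (c * x) * (W x)\<^sup>2) + exp (c * x) * W x * w x) has_integral (\<Phi> b - \<Phi> a)) {a..b}"
  proof (rule fundamental_theorem_of_calculus_interior_strong[OF S ab])
    fix x assume x: "x \<in> {a<..<b} - S"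
    have "(\<Phi> has_real_derivative c / 2 * (exp (c * x) * (W x)\<^sup>2) + exp (c * x) * W x * w x) (at x)"
      unfolding \<Phi>_def by (rule derivative_eq_intros Wd[OF x] refl | simp add: algebra_simps)+
    then show "(\<Phi> has_vector_derivative c / 2 * (exp (c * x) * (W x)\<^sup>2) + exp (c * x) * W x * w x) (at x)"
      by (simp add: has_real_derivative_iff_has_vector_derivative)
  qed (auto simp: \<Phi>_def intro!: continuous_intros Wc)
  moreover have "((\<lambda>x. c / 2 * (exp (c * x) * (W x)\<^sup>2)) has_integral c / 2 * integral {a..b} (\<lambda>x. exp (c * x) * (W x)\<^sup>2)) {a..b}"
    by (intro has_integral_mult_right integrable_integral integrable_continuous_real continuous_intros Wc)
  ultimately show ?thesis
    unfolding \<Phi>_def by (auto dest: has_integral_diff)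
qed

lemma exp_weighted_left_primitive_form_nonneg:
  fixes w :: "real \<Rightarrow> real"
  assumes S: "finite S" and ab: "a \<le> b" and c: "c \<le> 0" and w: "w integrable_on {a..b}"
    and wc: "\<And>x. x \<in> {a<..<b} - S \<Longrightarrow> isCont w x"
  shows "\<exists>I\<ge>0. ((\<lambda>x. exp (c * x) * integral {a..x} w * w x) has_integral I) {a..b}"
proof -
  define W where "W x = integral {a..x} w" for x
  have Wc: "continuous_on {a..b} W"
    unfolding W_def by (rule indefinite_integral_continuous_1[OF w])
  have prim: "((\<lambda>x. exp (c * x) * W x * w x) has_integral
      exp (c * b) * (W b)\<^sup>2 / 2 - exp (c * a) * (W a)\<^sup>2 / 2
      - c / 2 * integral {a..b} (\<lambda>x. exp (c * x) * (W x)\<^sup>2)) {a..b}"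
  proof (rule has_integral_exp_weighted_primitive[OF S ab Wc])
    fix x assume "x \<in> {a<..<b} - S"
    then show "(W has_real_derivative w x) (at x)"
      unfolding W_def using indefinite_integral_has_real_derivative[OF w wc] by blast
  qed
  have "0 \<le> integral {a..b} (\<lambda>x. exp (c * x) * (W x)\<^sup>2)"
    by (intro Henstock_Kurzweil_Integration.integral_nonneg integrable_continuous_real continuous_intros Wc) simp
  then have "0 \<le> exp (c * b) * (W b)\<^sup>2 / 2 + (- c / 2) * integral {a..b} (\<lambda>x. exp (c * x) * (W x)\<^sup>2)"
    using c by (intro add_nonneg_nonneg mult_nonneg_nonneg) auto
  also have "\<dots> = exp (c * b) * (W b)\<^sup>2 / 2 - exp (c * a) * (W a)\<^sup>2 / 2
      - c / 2 * integral {a..b} (\<lambda>x. exp (c * x) * (W x)\<^sup>2)"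
    by (simp add: W_def[of a])
  finally have "0 \<le> exp (c * b) * (W b)\<^sup>2 / 2 - exp (c * a) * (W a)\<^sup>2 / 2
      - c / 2 * integral {a..b} (\<lambda>x. exp (c * x) * (W x)\<^sup>2)" .
  with prim show ?thesis unfolding W_def by blast
qed

lemma exp_weighted_right_primitive_form_nonneg:
  fixes w :: "real \<Rightarrow> real"
  assumes S: "finite S" and ab: "a \<le> b" and c: "0 \<le> c" and w: "w integrable_on {a..b}"
    and wc: "\<And>x. x \<in> {a<..<b} - S \<Longrightarrow> isCont w x"
  shows "\<exists>I\<ge>0. ((\<lambda>x. exp (c * x) * integral {x..b} w * w x) has_integral I) {a..b}"
proof -
  define V where "V x = integral {x..b} w" for x
  have Vc: "continuous_on {a..b} V"
    unfolding V_def by (rule indefinite_integral_continuous_1'[OF w])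
  have "((\<lambda>x. exp (c * x) * V x * - w x) has_integral
      exp (c * b) * (V b)\<^sup>2 / 2 - exp (c * a) * (V a)\<^sup>2 / 2
      - c / 2 * integral {a..b} (\<lambda>x. exp (c * x) * (V x)\<^sup>2)) {a..b}"
  proof (rule has_integral_exp_weighted_primitive[OF S ab Vc])
    fix x assume x: "x \<in> {a<..<b} - S"
    have "((\<lambda>y. integral {a..b} w - integral {a..y} w) has_real_derivative - w x) (at x)"
      using indefinite_integral_has_real_derivative[OF w wc[OF x]] x by (auto intro!: derivative_eq_intros)
    then show "(V has_real_derivative - w x) (at x)"
    proof (rule has_field_derivative_transform_within_open[where S="{a<..<b}"])
      fix y assume "y \<in> {a<..<b}"
      then show "integral {a..b} w - integral {a..y} w = V y"
        unfolding V_def using Henstock_Kurzweil_Integration.integral_combine[OF _ _ w, of y] by auto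
    qed (use x in auto)
  qed
  from has_integral_neg[OF this]
  have "((\<lambda>x. exp (c * x) * V x * w x) has_integral
      - (exp (c * b) * (V b)\<^sup>2 / 2 - exp (c * a) * (V a)\<^sup>2 / 2
      - c / 2 * integral {a..b} (\<lambda>x. exp (c * x) * (V x)\<^sup>2))) {a..b}"
    by (simp only: mult_minus_right minus_minus)
  moreover have "0 \<le> integral {a..b} (\<lambda>x. exp (c * x) * (V x)\<^sup>2)"
    by (intro Henstock_Kurzweil_Integration.integral_nonneg integrable_continuous_real continuous_intros Vc) simp
  then have "0 \<le> c / 2 * integral {a..b} (\<lambda>x. exp (c * x) * (V x)\<^sup>2)"
    using c by simp
  then have "0 \<le> - (exp (c * b) * (V b)\<^sup>2 / 2 - exp (c * a) * (V a)\<^sup>2 / 2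
      - c / 2 * integral {a..b} (\<lambda>x. exp (c * x) * (V x)\<^sup>2))"
    by (simp add: V_def)
  ultimately show ?thesis unfolding V_def by blast
qed

definition kernel_form :: "real \<Rightarrow> real \<Rightarrow> (real \<Rightarrow> real \<Rightarrow> real) \<Rightarrow> (real \<Rightarrow> real) \<Rightarrow> real" where
  "kernel_form a b k g =
     (\<integral>x. indicator {a..b} x * g x * (\<integral>s. indicator {a..b} s * g s * k x s \<partial>lborel) \<partial>lborel)"

lemma integrable_on_mult_exp:
  fixes g :: "real \<Rightarrow> real"
  assumes gm[measurable]: "g \<in> borel_measurable borel" and gM: "\<And>x. \<bar>g x\<bar> \<le> M"
  shows "(\<lambda>s. g s * exp (c * s)) integrable_on {a..b}"
proof (rule integrable_on_bounded_Icc[where B="M * (exp (c * a) + exp (c * b))"])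
  fix s assume s: "s \<in> {a..b}"
  have "exp (c * s) \<le> exp (c * a) + exp (c * b)"
  proof (cases "0 \<le> c")
    case True
    then have "exp (c * s) \<le> exp (c * b)" using s by (simp add: mult_left_mono)
    then show ?thesis by (simp add: add_increasing)
  next
    case False
    then have "exp (c * s) \<le> exp (c * a)" using s by (simp add: mult_left_mono_neg)
    then show ?thesis by (simp add: add_increasing2)
  qed
  then show "\<bar>g s * exp (c * s)\<bar> \<le> M * (exp (c * a) + exp (c * b))"
    using gM[of s] by (simp add: abs_mult mult_mono)
qed simp

lemma integral_exp_kernel_split:
  fixes g :: "real \<Rightarrow> real" and t x :: real
  assumes x: "x \<in> {a..b}" and int: "(\<lambda>s. g s * exp (- t * \<bar>x - s\<bar>)) integrable_on {a..b}"
  shows "integral {a..b} (\<lambda>s. g s * exp (- t * \<bar>x - s\<bar>))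
    = exp (- (t * x)) * integral {a..x} (\<lambda>s. g s * exp (t * s))
      + exp (t * x) * integral {x..b} (\<lambda>s. g s * exp (- (t * s)))"
proof -
  have "integral {a..b} (\<lambda>s. g s * exp (- t * \<bar>x - s\<bar>))
      = integral {a..x} (\<lambda>s. g s * exp (- t * \<bar>x - s\<bar>)) + integral {x..b} (\<lambda>s. g s * exp (- t * \<bar>x - s\<bar>))"
    using int x by (simp add: Henstock_Kurzweil_Integration.integral_combine)
  also have "integral {a..x} (\<lambda>s. g s * exp (- t * \<bar>x - s\<bar>)) = integral {a..x} (\<lambda>s. exp (- (t * x)) * (g s * exp (t * s)))"
  proof (rule integral_cong)
    fix s assume "s \<in> {a..x}"
    then have "- t * \<bar>x - s\<bar> = - (t * x) + t * s" by (simp add: abs_of_nonneg right_diff_distrib)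
    then have "exp (- t * \<bar>x - s\<bar>) = exp (- (t * x)) * exp (t * s)" by (simp only: exp_add)
    then show "g s * exp (- t * \<bar>x - s\<bar>) = exp (- (t * x)) * (g s * exp (t * s))" by (simp add: mult_ac)
  qed
  also have "integral {x..b} (\<lambda>s. g s * exp (- t * \<bar>x - s\<bar>)) = integral {x..b} (\<lambda>s. exp (t * x) * (g s * exp (- (t * s))))"
  proof (rule integral_cong)
    fix s assume "s \<in> {x..b}"
    then have "- t * \<bar>x - s\<bar> = t * x + - (t * s)" by (simp add: abs_of_nonpos right_diff_distrib)
    then have "exp (- t * \<bar>x - s\<bar>) = exp (t * x) * exp (- (t * s))" by (simp only: exp_add)
    then show "g s * exp (- t * \<bar>x - s\<bar>) = exp (t * x) * (g s * exp (- (t * s)))" by (simp add: mult_ac)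
  qed
  finally show ?thesis by simp
qed

lemma exp_kernel_form_nonneg:
  fixes g :: "real \<Rightarrow> real" and a b t M :: real and S :: "real set"
  assumes ab: "a \<le> b" and t: "t > 0" and gm[measurable]: "g \<in> borel_measurable borel"
    and gM: "\<And>x. \<bar>g x\<bar> \<le> M"
    and S: "finite S" and gc: "\<And>x. x \<in> {a<..<b} - S \<Longrightarrow> isCont g x"
  shows "0 \<le> kernel_form a b (\<lambda>x s. exp (- t * \<bar>x - s\<bar>)) g"
proof -
  have M0: "0 \<le> M" using gM[of 0] by linarith
  define f1 where "f1 = (\<lambda>s. g s * exp (t * s))"
  define f2 where "f2 = (\<lambda>s. g s * exp (- (t * s)))"
  have f1i: "f1 integrable_on {a..b}" and f2i: "f2 integrable_on {a..b}"
    unfolding f1_def f2_def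
    using integrable_on_mult_exp[OF gm gM, of t] integrable_on_mult_exp[OF gm gM, of "- t"] by simp_all
  have "isCont f1 x" "isCont f2 x" if "x \<in> {a<..<b} - S" for x
    unfolding f1_def f2_def using gc[OF that] by (auto intro!: continuous_intros)
  then obtain I1 I2 where I: "0 \<le> I1" "0 \<le> I2"
    and I1: "((\<lambda>x. exp (- (2 * t) * x) * integral {a..x} f1 * f1 x) has_integral I1) {a..b}"
    and I2: "((\<lambda>x. exp (2 * t * x) * integral {x..b} f2 * f2 x) has_integral I2) {a..b}"
    using exp_weighted_left_primitive_form_nonneg[OF S ab _ f1i, of "- (2 * t)"]
      exp_weighted_right_primitive_form_nonneg[OF S ab _ f2i, of "2 * t"] t
    by auto
  define k where "k = (\<lambda>x s. g s * exp (- t * \<bar>x - s\<bar>))"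
  have k_meas: "k x \<in> borel_measurable borel" for x unfolding k_def by measurable
  have k_bound: "\<bar>k x s\<bar> \<le> M" for x s
  proof -
    have "\<bar>k x s\<bar> = \<bar>g s\<bar> * exp (- t * \<bar>x - s\<bar>)" unfolding k_def by (simp add: abs_mult)
    also have "\<dots> \<le> M * 1"
      using t by (intro mult_mono gM M0) (simp_all add: mult_nonneg_nonneg)
    finally show ?thesis by simp
  qed
  define L where "L x = (LINT s:{a..b}|lborel. k x s)" for x
  have L_eq: "L x = exp (- (t * x)) * integral {a..x} f1 + exp (t * x) * integral {x..b} f2"
    if x: "x \<in> {a..b}" for x
  proof -
    have "L x = integral {a..b} (k x)"
      unfolding L_def by (rule integral_bounded_Icc_eq[where B=M]) (simp_all add: k_meas k_bound)
    moreover have "k x integrable_on {a..b}"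
      by (rule integrable_on_bounded_Icc[where B=M]) (simp_all add: k_meas k_bound)
    ultimately show ?thesis
      using integral_exp_kernel_split[OF x, of g t] unfolding k_def f1_def f2_def by simp
  qed
  have "((\<lambda>x. g x * L x) has_integral I1 + I2) {a..b}"
  proof (rule has_integral_spike_finite[where S="{}", OF _ _ has_integral_add[OF I1 I2]])
    fix x assume "x \<in> {a..b} - {}"
    then have "g x * L x = g x * exp (- (t * x)) * integral {a..x} f1 + g x * exp (t * x) * integral {x..b} f2"
      by (simp add: L_eq distrib_left mult.assoc)
    also have "g x * exp (- (t * x)) = exp (- (2 * t) * x) * f1 x"
      unfolding f1_def by (simp add: mult.assoc flip: exp_add)
    also have "g x * exp (t * x) = exp (2 * t * x) * f2 x"
      unfolding f2_def by (simp add: mult.assoc flip: exp_add)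
    finally show "g x * L x = exp (- (2 * t) * x) * integral {a..x} f1 * f1 x
        + exp (2 * t * x) * integral {x..b} f2 * f2 x"
      by (simp add: mult_ac)
  qed simp
  then have "0 \<le> integral {a..b} (\<lambda>x. g x * L x)"
    using I by (simp add: integral_unique)
  also have "integral {a..b} (\<lambda>x. g x * L x) = (LINT x:{a..b}|lborel. g x * L x)"
  proof (rule integral_bounded_Icc_eq[where B="M * (M * (b - a))", symmetric])
    show "(\<lambda>x. g x * L x) \<in> borel_measurable borel"
      unfolding L_def k_def set_lebesgue_integral_def by measurable
    fix x
    have "\<bar>L x\<bar> \<le> M * (b - a)"
      unfolding L_def by (rule abs_set_integral_bounded_Icc_le[OF k_meas k_bound ab])
    then show "\<bar>g x * L x\<bar> \<le> M * (M * (b - a))"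
      using gM[of x] M0 by (simp add: abs_mult mult_mono)
  qed
  also have "\<dots> = kernel_form a b (\<lambda>x s. exp (- t * \<bar>x - s\<bar>)) g"
    unfolding kernel_form_def L_def k_def set_lebesgue_integral_def by (simp add: mult.assoc)
  finally show ?thesis .
qed

lemma nn_integral_Laplace_kernel_le:
  fixes g :: "real \<Rightarrow> real" and a b \<gamma> M x :: real
  assumes ab: "a \<le> b" and g0: "0 < \<gamma>" and g1: "\<gamma> < 1" and gM: "\<And>x. \<bar>g x\<bar> \<le> M"
  shows "(\<integral>\<^sup>+s. \<integral>\<^sup>+t. ennreal (norm (indicator {a..b} x * g x * (indicator {a..b} s * g s) * (indicator {0..} t * t powr (\<gamma> - 1) * exp (- t * \<bar>x - s\<bar>)))) \<partial>lborel \<partial>lborel)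
       \<le> ennreal (M * M * Gamma \<gamma> * (2 * ((b - a) powr (1 - \<gamma>) / (1 - \<gamma>))) * indicator {a..b} x)"
proof -
  have M0: "M \<ge> 0" using gM[of 0] by linarith
  define B0 where "B0 = 2 * ((b - a) powr (1 - \<gamma>) / (1 - \<gamma>))"
  define gg where "gg s = \<bar>indicator {a..b} x * g x * (indicator {a..b} s * g s)\<bar>" for s
  have "(\<integral>\<^sup>+s. \<integral>\<^sup>+t. ennreal (norm (indicator {a..b} x * g x * (indicator {a..b} s * g s) * (indicator {0..} t * t powr (\<gamma> - 1) * exp (- t * \<bar>x - s\<bar>)))) \<partial>lborel \<partial>lborel)
      = (\<integral>\<^sup>+s. ennreal (gg s * Gamma \<gamma>) * ennreal (indicator {a..b} s * \<bar>x - s\<bar> powr (-\<gamma>)) \<partial>lborel)"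
  proof (rule nn_integral_cong_AE)
    show "AE s in lborel. (\<integral>\<^sup>+t. ennreal (norm (indicator {a..b} x * g x * (indicator {a..b} s * g s) * (indicator {0..} t * t powr (\<gamma> - 1) * exp (- t * \<bar>x - s\<bar>)))) \<partial>lborel) =
        ennreal (gg s * Gamma \<gamma>) * ennreal (indicator {a..b} s * \<bar>x - s\<bar> powr (-\<gamma>))"
      using AE_lborel_singleton[of x]
    proof eventually_elim
      case (elim s)
      have r: "\<bar>x - s\<bar> > 0" using elim by simp
      have "(\<integral>\<^sup>+t. ennreal (norm (indicator {a..b} x * g x * (indicator {a..b} s * g s) * (indicator {0..} t * t powr (\<gamma> - 1) * exp (- t * \<bar>x - s\<bar>)))) \<partial>lborel)
        = (\<integral>\<^sup>+t. ennreal (gg s) * ennreal (indicator {0..} t * t powr (\<gamma> - 1) * exp (- t * \<bar>x - s\<bar>)) \<partial>lborel)"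
        by (intro nn_integral_cong) (auto simp: gg_def abs_mult ennreal_mult'[symmetric] indicator_def)
      also have "\<dots> = ennreal (gg s) * ennreal (Gamma \<gamma> * \<bar>x - s\<bar> powr (-\<gamma>))"
        by (subst nn_integral_cmult) (auto simp: nn_integral_Gamma_Laplace[OF r g0, simplified])
      also have "\<dots> = ennreal (gg s * Gamma \<gamma>) * ennreal (indicator {a..b} s * \<bar>x - s\<bar> powr (-\<gamma>))"
        using g0 by (auto simp: gg_def ennreal_mult'[symmetric] Gamma_real_pos less_imp_le indicator_def)
      finally show ?case .
    qed
  qed
  also have "\<dots> \<le> (\<integral>\<^sup>+s. ennreal (M * M * Gamma \<gamma> * indicator {a..b} x) * ennreal (indicator {a..b} s * \<bar>x - s\<bar> powr (-\<gamma>)) \<partial>lborel)"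
  proof (intro nn_integral_mono mult_right_mono ennreal_leI)
    fix s
    have "gg s \<le> M * M * indicator {a..b} x"
      unfolding gg_def using gM[of x] gM[of s] M0 by (auto simp: indicator_def abs_mult intro: mult_mono)
    then show "gg s * Gamma \<gamma> \<le> M * M * Gamma \<gamma> * indicator {a..b} x"
      using Gamma_real_pos[OF g0] by (simp add: mult_right_mono mult.commute mult.left_commute)
  qed simp
  also have "\<dots> = ennreal (M * M * Gamma \<gamma> * indicator {a..b} x) * (\<integral>\<^sup>+s. ennreal (indicator {a..b} s * \<bar>x - s\<bar> powr (-\<gamma>)) \<partial>lborel)"
    by (rule nn_integral_cmult) simp
  also have "\<dots> \<le> ennreal (M * M * Gamma \<gamma> * indicator {a..b} x) * ennreal B0"
  proof (cases "x \<in> {a..b}")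
    case True
    then show ?thesis using nn_integral_abs_powr_kernel_le[OF ab True g1] unfolding B0_def
      by (intro mult_left_mono) auto
  qed simp
  also have "\<dots> = ennreal (M * M * Gamma \<gamma> * B0 * indicator {a..b} x)"
    using M0 g0 g1 ab by (simp add: ennreal_mult'[symmetric] B0_def Gamma_real_pos less_imp_le mult_ac)
  finally show ?thesis by (simp add: B0_def)
qed

lemma Laplace_kernel_integrable:
  fixes g :: "real \<Rightarrow> real" and a b \<gamma> M :: real
  assumes ab: "a \<le> b" and g0: "0 < \<gamma>" and g1: "\<gamma> < 1"
    and gm[measurable]: "g \<in> borel_measurable borel" and gM: "\<And>x. \<bar>g x\<bar> \<le> M"
  shows "integrable ((lborel \<Otimes>\<^sub>M lborel) \<Otimes>\<^sub>M lborel)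
    (\<lambda>(p, t). indicator {a..b} (fst p) * g (fst p) * (indicator {a..b} (snd p) * g (snd p))
       * (indicator {0..} t * t powr (\<gamma> - 1) * exp (- t * \<bar>fst p - snd p\<bar>)))"
    (is "integrable _ (\<lambda>(p, t). ?C p t)")
proof (rule integrableI_bounded)
  define B0 where "B0 = 2 * ((b - a) powr (1 - \<gamma>) / (1 - \<gamma>))"
  have inner: "(\<integral>\<^sup>+s. \<integral>\<^sup>+t. ennreal (norm (?C (x, s) t)) \<partial>lborel \<partial>lborel)
       \<le> ennreal (M * M * Gamma \<gamma> * B0 * indicator {a..b} x)" for x
    using nn_integral_Laplace_kernel_le[OF ab g0 g1 gM] unfolding B0_def by simp
  have "(\<integral>\<^sup>+z. ennreal (norm ((\<lambda>(p, t). ?C p t) z)) \<partial>((lborel \<Otimes>\<^sub>M lborel) \<Otimes>\<^sub>M lborel))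
      = (\<integral>\<^sup>+p. \<integral>\<^sup>+t. ennreal (norm (?C p t)) \<partial>lborel \<partial>(lborel \<Otimes>\<^sub>M lborel))"
    by (subst lborel.nn_integral_fst[symmetric]) auto
  also have "\<dots> = (\<integral>\<^sup>+x. \<integral>\<^sup>+s. \<integral>\<^sup>+t. ennreal (norm (?C (x, s) t)) \<partial>lborel \<partial>lborel \<partial>lborel)"
  proof (subst lborel.nn_integral_fst[symmetric])
    show "(\<lambda>p. \<integral>\<^sup>+t. ennreal (norm (?C p t)) \<partial>lborel) \<in> borel_measurable (lborel \<Otimes>\<^sub>M lborel)"
      using lborel.borel_measurable_nn_integral_fst[of "\<lambda>z. ennreal (norm ((\<lambda>(p, t). ?C p t) z))" "lborel \<Otimes>\<^sub>M lborel"]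
      by simp
  qed simp
  also have "\<dots> \<le> (\<integral>\<^sup>+x. ennreal (M * M * Gamma \<gamma> * B0) * indicator {a..b} x \<partial>lborel)"
    by (intro nn_integral_mono order_trans[OF inner]) (auto simp: indicator_def)
  also have "\<dots> = ennreal (M * M * Gamma \<gamma> * B0) * (b - a)"
    using ab by (simp add: nn_integral_cmult_indicator)
  also have "\<dots> < \<infinity>" by (simp add: ennreal_mult_less_top)
  finally show "(\<integral>\<^sup>+z. ennreal (norm ((\<lambda>(p, t). ?C p t) z)) \<partial>((lborel \<Otimes>\<^sub>M lborel) \<Otimes>\<^sub>M lborel)) < \<infinity>" .
qed measurable

lemma exp_kernel_product_integrable:
  fixes g :: "real \<Rightarrow> real" and a b t M :: real
  assumes ab: "a \<le> b" and t: "0 \<le> t"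
    and gm[measurable]: "g \<in> borel_measurable borel" and gM: "\<And>x. \<bar>g x\<bar> \<le> M"
  shows "integrable (lborel \<Otimes>\<^sub>M lborel) (\<lambda>p. indicator {a..b} (fst p) * g (fst p) * (indicator {a..b} (snd p) * g (snd p) * exp (- t * \<bar>fst p - snd p\<bar>)))"
proof (rule integrableI_bounded_set[where A="{a..b} \<times> {a..b}" and B="M * M"])
  show "emeasure (lborel \<Otimes>\<^sub>M lborel) ({a..b} \<times> {a..b}) < \<infinity>"
    using ab by (simp add: lborel.emeasure_pair_measure_Times ennreal_mult_less_top)
  show "AE p in lborel \<Otimes>\<^sub>M lborel. p \<in> {a..b} \<times> {a..b} \<longrightarrow> norm (indicator {a..b} (fst p) * g (fst p) * (indicator {a..b} (snd p) * g (snd p) * exp (- t * \<bar>fst p - snd p\<bar>))) \<le> M * M"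
  proof (intro AE_I2 impI)
    fix p :: "real \<times> real"
    have M0: "0 \<le> M" using gM[of 0] by linarith
    have e: "exp (- t * \<bar>fst p - snd p\<bar>) \<le> 1" using t by (simp add: mult_nonneg_nonneg)
    have "norm (indicator {a..b} (fst p) * g (fst p) * (indicator {a..b} (snd p) * g (snd p) * exp (- t * \<bar>fst p - snd p\<bar>))) \<le> \<bar>g (fst p)\<bar> * (\<bar>g (snd p)\<bar> * 1)"
      using e by (auto simp: abs_mult indicator_def intro!: mult_mono mult_left_le)
    also have "\<dots> \<le> M * M" using gM[of "fst p"] gM[of "snd p"] M0 by (simp add: mult_mono)
    finally show "norm (indicator {a..b} (fst p) * g (fst p) * (indicator {a..b} (snd p) * g (snd p) * exp (- t * \<bar>fst p - snd p\<bar>))) \<le> M * M" .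
  qed
qed (auto simp: indicator_def)

lemma abs_powr_kernel_form_Laplace:
  fixes g :: "real \<Rightarrow> real" and a b \<gamma> M :: real
  assumes ab: "a \<le> b" and g0: "0 < \<gamma>" and g1: "\<gamma> < 1"
    and gm[measurable]: "g \<in> borel_measurable borel" and gM: "\<And>x. \<bar>g x\<bar> \<le> M"
  shows "Gamma \<gamma> * kernel_form a b (\<lambda>x s. \<bar>x - s\<bar> powr (-\<gamma>)) g
       = (\<integral>t. indicator {0..} t * t powr (\<gamma> - 1) * kernel_form a b (\<lambda>x s. exp (- t * \<bar>x - s\<bar>)) g \<partial>lborel)"
proof -
  define C where "C = (\<lambda>(p::real\<times>real) (t::real). indicator {a..b} (fst p) * g (fst p) * (indicator {a..b} (snd p) * g (snd p))
        * (indicator {0..} t * t powr (\<gamma> - 1) * exp (- t * \<bar>fst p - snd p\<bar>)))"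
  have [measurable]: "case_prod C \<in> borel_measurable ((lborel \<Otimes>\<^sub>M lborel) \<Otimes>\<^sub>M lborel)"
    unfolding C_def by measurable
  have int: "integrable ((lborel \<Otimes>\<^sub>M lborel) \<Otimes>\<^sub>M lborel) (case_prod C)"
    unfolding C_def by (rule Laplace_kernel_integrable[OF assms])
  interpret P: pair_sigma_finite "lborel \<Otimes>\<^sub>M lborel :: (real \<times> real) measure" "lborel :: real measure"
    unfolding pair_sigma_finite_def
    by (simp add: lborel.sigma_finite_measure_axioms sigma_finite_pair_measure)
  define \<phi> where "\<phi> = (\<lambda>p. \<integral>t. C p t \<partial>lborel)"
  have "integral\<^sup>L ((lborel \<Otimes>\<^sub>M lborel) \<Otimes>\<^sub>M lborel) (case_prod C) = (\<integral>p. \<phi> p \<partial>(lborel \<Otimes>\<^sub>M lborel))"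
    using P.integral_fst'[OF int] by (simp add: \<phi>_def)
  also have "\<dots> = (\<integral>x. \<integral>s. \<phi> (x, s) \<partial>lborel \<partial>lborel)"
    using lborel_pair.integral_fst'[OF P.integrable_fst'[OF int]] by (simp add: \<phi>_def)
  also have "\<dots> = (\<integral>x. Gamma \<gamma> * (indicator {a..b} x * g x *
              (\<integral>s. indicator {a..b} s * g s * \<bar>x - s\<bar> powr (-\<gamma>) \<partial>lborel)) \<partial>lborel)"
  proof (intro Bochner_Integration.integral_cong refl)
    fix x :: real
    have "(\<integral>s. \<phi> (x, s) \<partial>lborel) = (\<integral>s. Gamma \<gamma> * (indicator {a..b} x * g x) * (indicator {a..b} s * g s * \<bar>x - s\<bar> powr (-\<gamma>)) \<partial>lborel)"
    proof (rule integral_cong_AE)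
      show "AE s in lborel. \<phi> (x, s) = Gamma \<gamma> * (indicator {a..b} x * g x) * (indicator {a..b} s * g s * \<bar>x - s\<bar> powr (-\<gamma>))"
        using AE_lborel_singleton[of x]
      proof eventually_elim
        case (elim s)
        have r: "\<bar>x - s\<bar> > 0" using elim by simp
        have "\<phi> (x, s) = (\<integral>t. (indicator {a..b} x * g x * (indicator {a..b} s * g s)) * (indicator {0..} t * t powr (\<gamma> - 1) * exp (- t * \<bar>x - s\<bar>)) \<partial>lborel)"
          by (simp add: \<phi>_def C_def)
        also have "\<dots> = (indicator {a..b} x * g x * (indicator {a..b} s * g s)) * (Gamma \<gamma> * \<bar>x - s\<bar> powr (-\<gamma>))"
          by (subst integral_mult_right_zero) (simp only: integral_Gamma_Laplace[OF r g0])
        finally show ?case by (simp add: mult_ac)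
      qed
    qed (auto simp: \<phi>_def)
    also have "\<dots> = Gamma \<gamma> * (indicator {a..b} x * g x) * (\<integral>s. indicator {a..b} s * g s * \<bar>x - s\<bar> powr (-\<gamma>) \<partial>lborel)"
      by (rule integral_mult_right_zero)
    finally show "(\<integral>s. \<phi> (x, s) \<partial>lborel) = Gamma \<gamma> * (indicator {a..b} x * g x *
              (\<integral>s. indicator {a..b} s * g s * \<bar>x - s\<bar> powr (-\<gamma>) \<partial>lborel))" by (simp add: mult_ac)
  qed
  also have "\<dots> = Gamma \<gamma> * kernel_form a b (\<lambda>x s. \<bar>x - s\<bar> powr (-\<gamma>)) g"
    unfolding kernel_form_def by (rule integral_mult_right_zero)
  finally have fst_order: "integral\<^sup>L ((lborel \<Otimes>\<^sub>M lborel) \<Otimes>\<^sub>M lborel) (case_prod C)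
      = Gamma \<gamma> * kernel_form a b (\<lambda>x s. \<bar>x - s\<bar> powr (-\<gamma>)) g" .
  define K where "K = (\<lambda>t (p::real\<times>real). indicator {a..b} (fst p) * g (fst p) * (indicator {a..b} (snd p) * g (snd p) * exp (- t * \<bar>fst p - snd p\<bar>)))"
  have K_integrable: "integrable (lborel \<Otimes>\<^sub>M lborel) (K t)" if "t > 0" for t
    unfolding K_def using exp_kernel_product_integrable[OF ab _ gm gM, of t] that by simp
  have inner_snd: "(\<integral>p. C p t \<partial>(lborel \<Otimes>\<^sub>M lborel))
      = indicator {0..} t * t powr (\<gamma> - 1) * kernel_form a b (\<lambda>x s. exp (- t * \<bar>x - s\<bar>)) g" for t
  proof -
    have "(\<integral>p. C p t \<partial>(lborel \<Otimes>\<^sub>M lborel)) = (\<integral>p. (indicator {0..} t * t powr (\<gamma> - 1)) * K t p \<partial>(lborel \<Otimes>\<^sub>M lborel))"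
      by (intro Bochner_Integration.integral_cong refl) (simp add: C_def K_def mult_ac)
    also have "\<dots> = indicator {0..} t * t powr (\<gamma> - 1) * (\<integral>p. K t p \<partial>(lborel \<Otimes>\<^sub>M lborel))"
      by (rule integral_mult_right_zero)
    also have "\<dots> = indicator {0..} t * t powr (\<gamma> - 1) * kernel_form a b (\<lambda>x s. exp (- t * \<bar>x - s\<bar>)) g"
    proof (cases "t > 0")
      case True
      have "(\<integral>p. K t p \<partial>(lborel \<Otimes>\<^sub>M lborel)) = (\<integral>x. \<integral>s. K t (x, s) \<partial>lborel \<partial>lborel)"
        using lborel_pair.integral_fst'[OF K_integrable[OF True]] by simp
      then show ?thesis by (simp add: kernel_form_def K_def)
    next
      case False
      then have "indicator {0..} t * t powr (\<gamma> - 1) = (0::real)"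
        by (cases "t = 0") (auto simp: indicator_def)
      then show ?thesis by simp
    qed
    finally show ?thesis .
  qed
  have "integral\<^sup>L ((lborel \<Otimes>\<^sub>M lborel) \<Otimes>\<^sub>M lborel) (case_prod C) = (\<integral>t. \<integral>p. C p t \<partial>(lborel \<Otimes>\<^sub>M lborel) \<partial>lborel)"
    by (rule P.integral_snd[OF int, symmetric])
  then show ?thesis using fst_order inner_snd by simp
qed

lemma abs_powr_kernel_form_nonneg:
  fixes g :: "real \<Rightarrow> real" and a b \<gamma> M :: real and S :: "real set"
  assumes ab: "a \<le> b" and g0: "0 < \<gamma>" and g1: "\<gamma> < 1"
    and gm[measurable]: "g \<in> borel_measurable borel" and gM: "\<And>x. \<bar>g x\<bar> \<le> M"
    and S: "finite S" and gc: "\<And>x. x \<in> {a<..<b} - S \<Longrightarrow> isCont g x"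
  shows "0 \<le> kernel_form a b (\<lambda>x s. \<bar>x - s\<bar> powr (-\<gamma>)) g"
proof -
  have "0 \<le> (\<integral>t. indicator {0..} t * t powr (\<gamma> - 1) * kernel_form a b (\<lambda>x s. exp (- t * \<bar>x - s\<bar>)) g \<partial>lborel)"
  proof (rule Bochner_Integration.integral_nonneg)
    fix t :: real
    show "0 \<le> indicator {0..} t * t powr (\<gamma> - 1) * kernel_form a b (\<lambda>x s. exp (- t * \<bar>x - s\<bar>)) g"
      using exp_kernel_form_nonneg[OF ab _ gm gM S gc, of t]
      by (cases "t > 0") (auto simp: indicator_def)
  qed
  then show ?thesis
    unfolding abs_powr_kernel_form_Laplace[OF ab g0 g1 gm gM, symmetric]
    using Gamma_real_pos[OF g0] by (simp add: zero_le_mult_iff)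
qed

lemma frac_op_eq_kernel_integral:
  fixes g :: "real \<Rightarrow> real"
  assumes ab: "a \<le> b" and x: "x \<in> {a..b}" and a2: "\<alpha> < 2"
    and gm[measurable]: "g \<in> borel_measurable borel" and gM: "\<And>x. \<bar>g x\<bar> \<le> M"
  shows "frac_op \<alpha> a b g x = 1 / (2 * cos ((2 - \<alpha>) * pi / 2) * Gamma (2 - \<alpha>)) *
           (\<integral>s. indicator {a..b} s * g s * \<bar>x - s\<bar> powr (1 - \<alpha>) \<partial>lborel)"
proof -
  define k where "k = (\<lambda>s. \<bar>x - s\<bar> powr (1 - \<alpha>))"
  have km[measurable]: "k \<in> borel_measurable borel" unfolding k_def by measurable
  have Ki: "integrable lborel (\<lambda>s. indicator {a..b} s * k s)"
    using abs_powr_kernel_integrable[OF ab x, of "\<alpha> - 1"] a2 unfolding k_def by simp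
  have si: "set_integrable lborel A (\<lambda>s. k s * g s)" if A: "A \<subseteq> {a..b}" "A \<in> sets lborel" for A
    unfolding set_integrable_def
  proof (rule Bochner_Integration.integrable_bound[OF integrable_mult_right[OF Ki, of M]])
    show "(\<lambda>s. indicator A s *\<^sub>R (k s * g s)) \<in> borel_measurable lborel" using A by measurable
    show "AE s in lborel. norm (indicator A s *\<^sub>R (k s * g s)) \<le> norm (M * (indicator {a..b} s * k s))"
    proof (intro AE_I2)
      fix s
      have k0: "k s \<ge> 0" unfolding k_def by simp
      show "norm (indicator A s *\<^sub>R (k s * g s)) \<le> norm (M * (indicator {a..b} s * k s))"
        using A gM[of s] k0 by (auto simp: indicator_def abs_mult mult.commute[of M] intro: mult_left_mono)
    qed
  qed
  have left_half: "integral {a..x} (\<lambda>s. (x - s) powr (1 - \<alpha>) * g s) = (LINT s:{a..x}|lborel. k s * g s)"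
  proof -
    have "integral {a..x} (\<lambda>s. (x - s) powr (1 - \<alpha>) * g s) = integral {a..x} (\<lambda>s. k s * g s)"
      by (rule integral_cong) (auto simp: k_def)
    also have "\<dots> = (LINT s:{a..x}|lborel. k s * g s)"
      using set_borel_integral_eq_integral(2)[OF si] x by auto
    finally show ?thesis .
  qed
  have right_half: "integral {x..b} (\<lambda>s. (s - x) powr (1 - \<alpha>) * g s) = (LINT s:{x..b}|lborel. k s * g s)"
  proof -
    have "integral {x..b} (\<lambda>s. (s - x) powr (1 - \<alpha>) * g s) = integral {x..b} (\<lambda>s. k s * g s)"
      by (rule integral_cong) (auto simp: k_def)
    also have "\<dots> = (LINT s:{x..b}|lborel. k s * g s)"
      using set_borel_integral_eq_integral(2)[OF si] x by auto
    finally show ?thesis .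
  qed
  have halves: "(LINT s:{a..x}|lborel. k s * g s) + (LINT s:{x..b}|lborel. k s * g s)
      = (\<integral>s. indicator {a..b} s * g s * k s \<partial>lborel)"
  proof -
    have i1: "integrable lborel (\<lambda>s. indicator {a..x} s *\<^sub>R (k s * g s))"
      using si[of "{a..x}"] x unfolding set_integrable_def by auto
    have i2: "integrable lborel (\<lambda>s. indicator {x..b} s *\<^sub>R (k s * g s))"
      using si[of "{x..b}"] x unfolding set_integrable_def by auto
    have "(LINT s:{a..x}|lborel. k s * g s) + (LINT s:{x..b}|lborel. k s * g s)
        = (\<integral>s. indicator {a..x} s *\<^sub>R (k s * g s) + indicator {x..b} s *\<^sub>R (k s * g s) \<partial>lborel)"
      unfolding set_lebesgue_integral_def by (rule Bochner_Integration.integral_add[OF i1 i2, symmetric])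
    also have "\<dots> = (\<integral>s. indicator {a..b} s * g s * k s \<partial>lborel)"
    proof (rule integral_cong_AE)
      show "AE s in lborel. indicator {a..x} s *\<^sub>R (k s * g s) + indicator {x..b} s *\<^sub>R (k s * g s) = indicator {a..b} s * g s * k s"
        using AE_lborel_singleton[of x]
      proof eventually_elim
        case (elim s)
        then show ?case using x by (auto simp: indicator_def)
      qed
    qed simp_all
    finally show ?thesis .
  qed
  show ?thesis unfolding frac_op_def left_half right_half halves by (simp add: k_def)
qed

lemma abs_integral_abs_powr_kernel_le:
  fixes g :: "real \<Rightarrow> real"
  assumes ab: "a \<le> b" and x: "x \<in> {a..b}" and g1: "\<gamma> < 1"
    and gm[measurable]: "g \<in> borel_measurable borel" and gM: "\<And>x. \<bar>g x\<bar> \<le> M"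
  shows "\<bar>\<integral>s. indicator {a..b} s * g s * \<bar>x - s\<bar> powr (-\<gamma>) \<partial>lborel\<bar>
    \<le> M * (2 * ((b - a) powr (1 - \<gamma>) / (1 - \<gamma>)))"
proof -
  have M0: "0 \<le> M" using gM[of 0] by linarith
  note Ki = abs_powr_kernel_integrable[OF ab x g1]
  have bnd: "norm (indicator {a..b} s * g s * \<bar>x - s\<bar> powr (-\<gamma>)) \<le> M * (indicator {a..b} s * \<bar>x - s\<bar> powr (-\<gamma>))" for s
    using gM[of s] by (auto simp: indicator_def abs_mult intro: mult_right_mono)
  have Ii: "integrable lborel (\<lambda>s. indicator {a..b} s * g s * \<bar>x - s\<bar> powr (-\<gamma>))"
    by (rule Bochner_Integration.integrable_bound[OF integrable_mult_right[OF Ki, of M]])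
       (use bnd M0 in \<open>auto simp: abs_mult\<close>)
  have "\<bar>\<integral>s. indicator {a..b} s * g s * \<bar>x - s\<bar> powr (-\<gamma>) \<partial>lborel\<bar>
      \<le> (\<integral>s. norm (indicator {a..b} s * g s * \<bar>x - s\<bar> powr (-\<gamma>)) \<partial>lborel)"
    using integral_norm_bound[of lborel "\<lambda>s. indicator {a..b} s * g s * \<bar>x - s\<bar> powr (-\<gamma>)"] by simp
  also have "\<dots> \<le> (\<integral>s. M * (indicator {a..b} s * \<bar>x - s\<bar> powr (-\<gamma>)) \<partial>lborel)"
    by (rule integral_mono[OF integrable_norm[OF Ii] integrable_mult_right[OF Ki] bnd])
  also have "\<dots> = M * (\<integral>s. indicator {a..b} s * \<bar>x - s\<bar> powr (-\<gamma>) \<partial>lborel)" by simp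
  also have "\<dots> \<le> M * (2 * ((b - a) powr (1 - \<gamma>) / (1 - \<gamma>)))"
    by (rule mult_left_mono[OF abs_powr_kernel_integral_le[OF ab x g1] M0])
  finally show ?thesis .
qed

lemma frac_op_form_nonneg:
  fixes g :: "real \<Rightarrow> real"
  assumes ab: "a < b" and a1: "1 < \<alpha>" and a2: "\<alpha> < 2"
    and gm[measurable]: "g \<in> borel_measurable borel" and gM: "\<And>x. \<bar>g x\<bar> \<le> M"
    and S: "finite S" and gc: "\<And>x. x \<in> {a<..<b} - S \<Longrightarrow> isCont g x"
  shows "(\<lambda>y. frac_op \<alpha> a b g y * g y) integrable_on {a..b}"
    and "0 \<le> integral {a..b} (\<lambda>y. frac_op \<alpha> a b g y * g y)"
proof -
  have M0: "0 \<le> M" using gM[of 0] by linarith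
  define cst where "cst = 1 / (2 * cos ((2 - \<alpha>) * pi / 2) * Gamma (2 - \<alpha>))"
  have "cos ((2 - \<alpha>) * pi / 2) > 0"
    using a1 a2 by (intro cos_gt_zero_pi) (auto simp: field_simps)
  then have cst0: "cst > 0" unfolding cst_def using a2 by (simp add: Gamma_real_pos)
  define Lk where "Lk = (\<lambda>x. \<integral>s. indicator {a..b} s * g s * \<bar>x - s\<bar> powr (1 - \<alpha>) \<partial>lborel)"
  have Lkm[measurable]: "Lk \<in> borel_measurable borel" unfolding Lk_def by measurable
  define B0 where "B0 = 2 * ((b - a) powr (1 - (\<alpha> - 1)) / (1 - (\<alpha> - 1)))"
  have Lkb: "\<bar>Lk x\<bar> \<le> M * B0" if x: "x \<in> {a..b}" for x
    using abs_integral_abs_powr_kernel_le[OF less_imp_le[OF ab] x _ gm gM, of "\<alpha> - 1"] a2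
    unfolding Lk_def B0_def by simp
  have eqf: "frac_op \<alpha> a b g y * g y = cst * (Lk y * g y)" if "y \<in> {a..b}" for y
    using frac_op_eq_kernel_integral[OF less_imp_le[OF ab] that a2 gm gM] unfolding cst_def Lk_def by simp
  have si: "set_integrable lborel {a..b} (\<lambda>y. Lk y * g y)"
  proof (rule set_integrable_bounded_Icc[where B="M * B0 * M"])
    fix y assume "y \<in> {a..b}"
    then show "\<bar>Lk y * g y\<bar> \<le> M * B0 * M"
      using Lkb[of y] gM[of y] M0 by (simp add: abs_mult mult_mono)
  qed simp
  have ci: "(\<lambda>y. cst * (Lk y * g y)) integrable_on {a..b}"
    using set_borel_integral_eq_integral(1)[OF si] by (rule integrable_on_mult_right)
  show "(\<lambda>y. frac_op \<alpha> a b g y * g y) integrable_on {a..b}"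
    by (rule integrable_spike_finite[where S="{}", OF _ _ ci]) (use eqf in auto)
  have "integral {a..b} (\<lambda>y. frac_op \<alpha> a b g y * g y) = integral {a..b} (\<lambda>y. cst * (Lk y * g y))"
    by (rule integral_cong) (use eqf in auto)
  also have "\<dots> = cst * (LINT y:{a..b}|lborel. Lk y * g y)"
    using set_borel_integral_eq_integral(2)[OF si] by simp
  also have "(LINT y:{a..b}|lborel. Lk y * g y) = kernel_form a b (\<lambda>x s. \<bar>x - s\<bar> powr (-(\<alpha> - 1))) g"
    unfolding set_lebesgue_integral_def Lk_def kernel_form_def by (simp add: mult_ac)
  also have "0 \<le> cst * \<dots>"
    using cst0 abs_powr_kernel_form_nonneg[OF less_imp_le[OF ab] _ _ gm gM S gc, of "\<alpha> - 1"] a1 a2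
    by simp
  finally show "0 \<le> integral {a..b} (\<lambda>y. frac_op \<alpha> a b g y * g y)" .
qed

definition lagrange_basis :: "(nat \<Rightarrow> real) \<Rightarrow> nat \<Rightarrow> nat \<Rightarrow> real poly" where
  "lagrange_basis ys k j = smult (1 / (\<Prod>l\<in>{..k}-{j}. (ys j - ys l))) (\<Prod>l\<in>{..k}-{j}. [:- ys l, 1:])"

lemma degree_lagrange_basis_le: "j \<le> k \<Longrightarrow> degree (lagrange_basis ys k j) \<le> k"
proof -
  assume that: "j \<le> k"
  have "degree (\<Prod>l\<in>{..k}-{j}. [:- ys l, 1:]) \<le> (\<Sum>l\<in>{..k}-{j}. degree [:- ys l, 1:])"
    using degree_prod_sum_le[of "{..k}-{j}" "\<lambda>l. [:- ys l, 1:]"] by (simp add: o_def)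
  also have "\<dots> = card ({..k}-{j})" by simp
  also have "\<dots> \<le> k" using that by (auto simp: card_Diff_singleton)
  finally show ?thesis unfolding lagrange_basis_def by (meson degree_smult_le order_trans)
qed

lemma poly_lagrange_basis_node:
  assumes inj: "inj_on ys {..k}" and m: "m \<le> k" and j: "j \<le> k"
  shows "poly (lagrange_basis ys k j) (ys m) = (if m = j then 1 else 0)"
proof (cases "m = j")
  case True
  have "(\<Prod>l\<in>{..k}-{j}. (ys j - ys l)) \<noteq> 0"
    using inj j by (auto simp: prod_zero_iff inj_on_def)
  then show ?thesis using True unfolding lagrange_basis_def by (simp add: poly_prod)
next
  case False
  then have "m \<in> {..k}-{j}" using m by auto
  then have "(\<Prod>l\<in>{..k}-{j}. (ys m - ys l)) = 0" by (intro prod_zero) auto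
  then show ?thesis using False unfolding lagrange_basis_def by (simp add: poly_prod)
qed

lemma poly_eq_lagrange_interpolation:
  assumes inj: "inj_on ys {..k}" and deg: "degree p \<le> k"
  shows "poly p y = (\<Sum>j\<le>k. poly p (ys j) * poly (lagrange_basis ys k j) y)"
proof -
  define q where "q = (\<Sum>j\<le>k. smult (poly p (ys j)) (lagrange_basis ys k j))"
  have dq: "degree q \<le> k" unfolding q_def
    by (intro degree_sum_le) (use degree_lagrange_basis_le in auto)
  have "p = q"
  proof (rule poly_eqI_degree[where A="ys ` {..k}"])
    fix x assume "x \<in> ys ` {..k}"
    then obtain m where m: "m \<le> k" "x = ys m" by auto
    have "poly q x = (\<Sum>j\<le>k. poly p (ys j) * (if m = j then 1 else 0))"
      unfolding q_def m(2) by (simp add: poly_sum poly_lagrange_basis_node[OF inj m(1)])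
    also have "\<dots> = poly p x" using m by (simp add: if_distrib cong: if_cong)
    finally show "poly p x = poly q x" by simp
  next
    have "card (ys ` {..k}) = Suc k" using inj by (simp add: card_image)
    then show "degree p < card (ys ` {..k})" "degree q < card (ys ` {..k})" using deg dq by auto
  qed
  then have "poly p y = poly q y" by simp
  also have "\<dots> = (\<Sum>j\<le>k. poly p (ys j) * poly (lagrange_basis ys k j) y)" unfolding q_def by (simp add: poly_sum)
  finally show ?thesis .
qed

lemma integral_poly_mult_eq_lagrange_sum:
  assumes inj: "inj_on ys {..k}" and dp: "degree p \<le> k" and dq: "degree q \<le> k"
  shows "integral {c..d} (\<lambda>y. poly q y * poly p y) = (\<Sum>j\<le>k. \<Sum>l\<le>k. (poly q (ys j) * poly p (ys l)) *
           integral {c..d} (\<lambda>y. poly (lagrange_basis ys k j) y * poly (lagrange_basis ys k l) y))"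
proof -
  have "integral {c..d} (\<lambda>y. poly q y * poly p y) =
        integral {c..d} (\<lambda>y. \<Sum>j\<le>k. \<Sum>l\<le>k. (poly q (ys j) * poly p (ys l)) * (poly (lagrange_basis ys k j) y * poly (lagrange_basis ys k l) y))"
  proof (rule integral_cong)
    fix y
    show "poly q y * poly p y = (\<Sum>j\<le>k. \<Sum>l\<le>k. (poly q (ys j) * poly p (ys l)) * (poly (lagrange_basis ys k j) y * poly (lagrange_basis ys k l) y))"
      by (subst poly_eq_lagrange_interpolation[OF inj dq], subst poly_eq_lagrange_interpolation[OF inj dp], subst sum_product) (simp add: mult_ac)
  qed
  also have "\<dots> = (\<Sum>j\<le>k. integral {c..d} (\<lambda>y. \<Sum>l\<le>k. (poly q (ys j) * poly p (ys l)) * (poly (lagrange_basis ys k j) y * poly (lagrange_basis ys k l) y)))"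
    by (rule integral_sum) (auto intro!: integrable_continuous_real continuous_intros)
  also have "\<dots> = (\<Sum>j\<le>k. \<Sum>l\<le>k. integral {c..d} (\<lambda>y. (poly q (ys j) * poly p (ys l)) * (poly (lagrange_basis ys k j) y * poly (lagrange_basis ys k l) y)))"
    by (intro sum.cong refl integral_sum) (auto intro!: integrable_continuous_real continuous_intros)
  also have "\<dots> = (\<Sum>j\<le>k. \<Sum>l\<le>k. (poly q (ys j) * poly p (ys l)) *
           integral {c..d} (\<lambda>y. poly (lagrange_basis ys k j) y * poly (lagrange_basis ys k l) y))"
    by simp
  finally show ?thesis .
qed

text \<open>Sampling at \<open>k + 1\<close> distinct nodes turns \<open>\<integral> (poly (U \<tau>))\<^sup>2\<close> into a fixed quadratic form
  in finitely many point values, which are differentiable in \<open>\<tau>\<close> by assumption.\<close>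
lemma has_real_derivative_integral_poly_square:
  fixes c d T t :: real and k :: nat and U :: "real \<Rightarrow> real poly" and W :: "real poly"
  assumes cd: "c < d" and t: "t \<in> {0..T}"
    and deg: "\<And>\<tau>. \<tau> \<in> {0..T} \<Longrightarrow> degree (U \<tau>) \<le> k" and degt: "degree W \<le> k"
    and der: "\<And>y. y \<in> {c..d} \<Longrightarrow> ((\<lambda>\<tau>. poly (U \<tau>) y) has_real_derivative poly W y) (at t within {0..T})"
  shows "((\<lambda>\<tau>. integral {c..d} (\<lambda>y. (poly (U \<tau>) y)\<^sup>2)) has_real_derivative
           2 * integral {c..d} (\<lambda>y. poly W y * poly (U t) y)) (at t within {0..T})"
proof -
  define ys where "ys = (\<lambda>j::nat. c + real j * (d - c) / real (Suc k))"
  have inj: "inj_on ys {..k}"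
  proof (rule inj_onI)
    fix x y assume "ys x = ys y"
    then have "real x * (d - c) / real (Suc k) = real y * (d - c) / real (Suc k)" unfolding ys_def by simp
    then have "real x * (d - c) = real y * (d - c)" by (simp add: divide_cancel_right del: of_nat_Suc)
    then show "x = y" using cd by simp
  qed
  have ysin: "ys j \<in> {c..d}" if "j \<le> k" for j
  proof -
    have "real j * (d - c) \<le> real (Suc k) * (d - c)" using that cd by (intro mult_right_mono) auto
    then have "real j * (d - c) / real (Suc k) \<le> real (Suc k) * (d - c) / real (Suc k)"
      by (rule divide_right_mono) simp
    then have "real j * (d - c) / real (Suc k) \<le> (d - c)" by (simp del: of_nat_Suc)
    moreover have "0 \<le> real j * (d - c) / real (Suc k)" using cd by simp
    ultimately show ?thesis unfolding ys_def by auto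
  qed
  define M where "M = (\<lambda>j l. integral {c..d} (\<lambda>y. poly (lagrange_basis ys k j) y * poly (lagrange_basis ys k l) y))"
  define F where "F = (\<lambda>\<tau>. \<Sum>j\<le>k. \<Sum>l\<le>k. (poly (U \<tau>) (ys j) * poly (U \<tau>) (ys l)) * M j l)"
  have FE: "F \<tau> = integral {c..d} (\<lambda>y. (poly (U \<tau>) y)\<^sup>2)" if "\<tau> \<in> {0..T}" for \<tau>
    unfolding F_def M_def power2_eq_square using integral_poly_mult_eq_lagrange_sum[OF inj deg[OF that] deg[OF that]] by simp
  have "(F has_real_derivative (\<Sum>j\<le>k. \<Sum>l\<le>k. (poly W (ys j) * poly (U t) (ys l) + poly (U t) (ys j) * poly W (ys l)) * M j l)) (at t within {0..T})"
    unfolding F_def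
    by (intro DERIV_sum DERIV_cmult derivative_eq_intros der ysin) (auto simp: algebra_simps intro: der ysin)
  moreover have "(\<Sum>j\<le>k. \<Sum>l\<le>k. (poly W (ys j) * poly (U t) (ys l) + poly (U t) (ys j) * poly W (ys l)) * M j l)
      = 2 * integral {c..d} (\<lambda>y. poly W y * poly (U t) y)"
  proof -
    have sym: "M j l = M l j" for j l unfolding M_def by (simp add: mult.commute)
    have "(\<Sum>j\<le>k. \<Sum>l\<le>k. poly (U t) (ys j) * poly W (ys l) * M j l) = (\<Sum>j\<le>k. \<Sum>l\<le>k. poly W (ys j) * poly (U t) (ys l) * M j l)"
      by (subst sum.swap) (simp add: sym mult_ac)
    then have "(\<Sum>j\<le>k. \<Sum>l\<le>k. (poly W (ys j) * poly (U t) (ys l) + poly (U t) (ys j) * poly W (ys l)) * M j l)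
        = 2 * (\<Sum>j\<le>k. \<Sum>l\<le>k. poly W (ys j) * poly (U t) (ys l) * M j l)"
      by (simp add: distrib_right sum.distrib)
    also have "\<dots> = 2 * integral {c..d} (\<lambda>y. poly W y * poly (U t) y)"
      using integral_poly_mult_eq_lagrange_sum[OF inj deg[OF t] degt] unfolding M_def by simp
    finally show ?thesis .
  qed
  ultimately have "(F has_real_derivative 2 * integral {c..d} (\<lambda>y. poly W y * poly (U t) y)) (at t within {0..T})" by simp
  then show ?thesis
    by (rule has_field_derivative_transform_within[OF _ zero_less_one t]) (use FE in auto)
qed

lemma mesh_strict_mono:
  assumes m: "mesh a b K xn" and jl: "j < l" and lK: "l \<le> K"
  shows "xn j < xn l"
  using jl lK
proof (induction l)
  case 0 then show ?case by simp
next
  case (Suc l)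
  have st: "xn l < xn (Suc l)" using m Suc.prems unfolding mesh_def by (metis atLeastAtMost_iff diff_Suc_1 le_add1 plus_1_eq_Suc)
  show ?case
  proof (cases "j = l")
    case True then show ?thesis using st by simp
  next
    case False then have "j < l" using Suc.prems by simp
    then show ?thesis using Suc.IH Suc.prems st by simp
  qed
qed

lemma mesh_mono:
  assumes m: "mesh a b K xn" and jl: "j \<le> l" and lK: "l \<le> K"
  shows "xn j \<le> xn l"
  using mesh_strict_mono[OF m _ lK, of j] jl by (cases "j = l") auto

lemma pw_eq_cell_poly:
  assumes m: "mesh a b K xn" and i: "i \<in> {1..K}" and y: "xn (i-1) \<le> y" "y < xn i"
  shows "pw xn K P y = poly (P i) y"
proof -
  have "pw xn K P y = (\<Sum>j=1..K. if j = i then poly (P i) y else 0)"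
    unfolding pw_def
  proof (intro sum.cong refl)
    fix j assume j: "j \<in> {1..K}"
    show "(if xn (j - 1) \<le> y \<and> y < xn j then poly (P j) y else 0) = (if j = i then poly (P i) y else 0)"
    proof (cases "j = i")
      case True then show ?thesis using y by simp
    next
      case False
      show ?thesis
      proof (cases "j < i")
        case True
        then have "xn j \<le> xn (i - 1)" using mesh_mono[OF m, of j "i-1"] i by auto
        then show ?thesis using False y by auto
      next
        case False': False
        then have "xn i \<le> xn (j - 1)" using mesh_mono[OF m, of i "j-1"] j \<open>j \<noteq> i\<close> by auto
        then show ?thesis using False y by auto
      qed
    qed
  qed
  also have "\<dots> = poly (P i) y" using i by simp
  finally show ?thesis .
qed

lemma mesh_cell_exists:
  assumes m: "mesh a b K xn" and y: "y \<in> {a..<b}"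
  shows "\<exists>i\<in>{1..K}. xn (i-1) \<le> y \<and> y < xn i"
proof -
  define A where "A = {j. j \<le> K \<and> xn j \<le> y}"
  have fA: "finite A" unfolding A_def by auto
  have 0: "0 \<in> A" using m y unfolding A_def mesh_def by auto
  define j where "j = Max A"
  have jA: "j \<in> A" unfolding j_def using fA 0 by (intro Max_in) auto
  have jK: "j < K"
  proof -
    have "j \<le> K" "xn j \<le> y" using jA unfolding A_def by auto
    moreover have "xn K = b" using m unfolding mesh_def by auto
    ultimately show ?thesis using y by (cases "j = K") auto
  qed
  have "y < xn (Suc j)"
  proof (rule ccontr)
    assume "\<not> y < xn (Suc j)"
    then have "Suc j \<in> A" using jK unfolding A_def by auto
    then have "Suc j \<le> j" unfolding j_def using fA by (intro Max_ge) auto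
    then show False by simp
  qed
  then show ?thesis using jA jK unfolding A_def by (intro bexI[of _ "Suc j"]) auto
qed

lemma poly_measurable[measurable]: "poly (p :: real poly) \<in> borel_measurable borel"
proof -
  have "continuous_on UNIV (\<lambda>x. poly p (id x))" by (intro continuous_on_poly) (simp add: continuous_on_id id_def)
  then show ?thesis by (intro borel_measurable_continuous_onI) simp
qed

lemma pw_measurable[measurable]: "pw xn K P \<in> borel_measurable borel"
  unfolding pw_def by measurable

lemma pw_bounded:
  assumes m: "mesh a b K xn"
  shows "\<exists>M. \<forall>y. \<bar>pw xn K P y\<bar> \<le> M"
proof -
  have "\<forall>i. \<exists>B. \<forall>y\<in>{xn (i-1)..xn i}. \<bar>poly (P i) y\<bar> \<le> B"
  proof
    fix i
    have "bounded (poly (P i) ` {xn (i-1)..xn i})"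
      by (intro compact_imp_bounded compact_continuous_image continuous_intros) auto
    then show "\<exists>B. \<forall>y\<in>{xn (i-1)..xn i}. \<bar>poly (P i) y\<bar> \<le> B"
      unfolding bounded_real by auto
  qed
  then obtain B where B: "\<And>i y. y \<in> {xn (i-1)..xn i} \<Longrightarrow> \<bar>poly (P i) y\<bar> \<le> B i" by metis
  have "\<bar>pw xn K P y\<bar> \<le> (\<Sum>i=1..K. \<bar>B i\<bar>)" for y
  proof -
    have "\<bar>pw xn K P y\<bar> \<le> (\<Sum>i=1..K. \<bar>if xn (i - 1) \<le> y \<and> y < xn i then poly (P i) y else 0\<bar>)"
      unfolding pw_def by (rule sum_abs)
    also have "\<dots> \<le> (\<Sum>i=1..K. \<bar>B i\<bar>)"
    proof (rule sum_mono)
      fix i show "\<bar>if xn (i - 1) \<le> y \<and> y < xn i then poly (P i) y else 0\<bar> \<le> \<bar>B i\<bar>"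
        using B[of y i] by auto
    qed
    finally show ?thesis .
  qed
  then show ?thesis by blast
qed

lemma isCont_pw:
  assumes m: "mesh a b K xn" and x: "x \<in> {a<..<b} - xn ` {0..K}"
  shows "isCont (pw xn K P) x"
proof -
  obtain i where i: "i \<in> {1..K}" "xn (i-1) \<le> x" "x < xn i" using mesh_cell_exists[OF m, of x] x by auto
  have "xn (i-1) \<noteq> x" using x i by auto
  then have lt: "xn (i-1) < x" using i by simp
  have ev: "eventually (\<lambda>y. pw xn K P y = poly (P i) y) (nhds x)"
  proof (rule eventually_mono[OF eventually_nhds_in_open[of "{xn (i-1)<..<xn i}"]])
    show "open {xn (i-1)<..<xn i}" by simp
    show "x \<in> {xn (i-1)<..<xn i}" using lt i by simp
  qed (use pw_eq_cell_poly[OF m i(1)] in auto)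
  have "isCont (poly (P i)) x" by simp
  then show ?thesis using isCont_cong[OF ev] by simp
qed

lemma integral_sum_cells_upto:
  fixes \<phi> :: "real \<Rightarrow> real"
  assumes m: "mesh a b K xn" and n: "n \<le> K"
    and I: "\<And>i. i \<in> {1..K} \<Longrightarrow> \<phi> integrable_on {xn (i-1)..xn i}"
  shows "\<phi> integrable_on {xn 0..xn n} \<and> (\<Sum>i=1..n. integral {xn (i-1)..xn i} \<phi>) = integral {xn 0..xn n} \<phi>"
  using n
proof (induction n)
  case 0 then show ?case using integrable_on_refl[of \<phi> "xn 0"] by simp
next
  case (Suc n)
  have le: "xn 0 \<le> xn n" "xn n \<le> xn (Suc n)" using mesh_mono[OF m] Suc.prems by auto
  have i1: "\<phi> integrable_on {xn n..xn (Suc n)}" using I[of "Suc n"] Suc.prems by simp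
  have IH: "\<phi> integrable_on {xn 0..xn n}" "(\<Sum>i=1..n. integral {xn (i-1)..xn i} \<phi>) = integral {xn 0..xn n} \<phi>"
    using Suc by auto
  have int: "\<phi> integrable_on {xn 0..xn (Suc n)}" by (rule Henstock_Kurzweil_Integration.integrable_combine[OF le IH(1) i1])
  have "(\<Sum>i=1..Suc n. integral {xn (i-1)..xn i} \<phi>) = integral {xn 0..xn n} \<phi> + integral {xn n..xn (Suc n)} \<phi>"
    using IH(2) by simp
  also have "\<dots> = integral {xn 0..xn (Suc n)} \<phi>"
    by (rule Henstock_Kurzweil_Integration.integral_combine[OF le int])
  finally show ?case using int by simp
qed

lemma integral_sum_cells:
  fixes \<phi> :: "real \<Rightarrow> real"
  assumes m: "mesh a b K xn"
    and I: "\<And>i. i \<in> {1..K} \<Longrightarrow> \<phi> integrable_on {xn (i-1)..xn i}"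
  shows "\<phi> integrable_on {a..b}" "(\<Sum>i=1..K. integral {xn (i-1)..xn i} \<phi>) = integral {a..b} \<phi>"
  using integral_sum_cells_upto[OF m order_refl I] m unfolding mesh_def by auto

definition oriented_integral :: "(real \<Rightarrow> real) \<Rightarrow> real \<Rightarrow> real \<Rightarrow> real" where
  "oriented_integral f p q = integral {p..q} f - integral {q..p} f"

lemma oriented_integral_eq_integral: "p \<le> q \<Longrightarrow> oriented_integral f p q = integral {p..q} f"
  unfolding oriented_integral_def by (cases "p = q") auto

lemma oriented_integral_eq_minus_integral: "q \<le> p \<Longrightarrow> oriented_integral f p q = - integral {q..p} f"
  unfolding oriented_integral_def by (cases "p = q") auto

lemma oriented_integral_diff:
  fixes f :: "real \<Rightarrow> real"
  assumes fc: "continuous_on UNIV f"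
  shows "oriented_integral f p q = oriented_integral f 0 q - oriented_integral f 0 p"
proof -
  have C: "integral {x..z} f = integral {x..y} f + integral {y..z} f" if "x \<le> y" "y \<le> z" for x y z
    using Henstock_Kurzweil_Integration.integral_combine[OF that, of f] fc
    by (simp add: integrable_continuous_real continuous_on_subset)
  consider "0 \<le> p" "p \<le> q" | "p \<le> 0" "0 \<le> q" | "p \<le> q" "q \<le> 0"
    | "0 \<le> q" "q \<le> p" | "q \<le> 0" "0 \<le> p" | "q \<le> p" "p \<le> 0" by linarith
  then show ?thesis
  proof cases
    case 1 then show ?thesis using C[of 0 p q] by (simp add: oriented_integral_eq_integral)
  next
    case 2 then show ?thesis using C[of p 0 q] by (simp add: oriented_integral_eq_integral oriented_integral_eq_minus_integral)
  next
    case 3 then show ?thesis using C[of p q 0] by (simp add: oriented_integral_eq_integral oriented_integral_eq_minus_integral)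
  next
    case 4 then show ?thesis using C[of 0 q p] by (simp add: oriented_integral_eq_integral oriented_integral_eq_minus_integral)
  next
    case 5 then show ?thesis using C[of q 0 p] by (simp add: oriented_integral_eq_integral oriented_integral_eq_minus_integral)
  next
    case 6 then show ?thesis using C[of q p 0] by (simp add: oriented_integral_eq_integral oriented_integral_eq_minus_integral)
  qed
qed

lemma monotone_flux_dissipation:
  fixes f :: "real \<Rightarrow> real"
  assumes mf: "monotone_flux F f" and fc: "continuous_on UNIV f"
  shows "0 \<le> F u v * (u - v) + oriented_integral f u v"
proof -
  have fi: "f integrable_on {x..y}" for x y by (rule integrable_continuous_real) (rule continuous_on_subset[OF fc], simp)
  have m1: "F x z \<le> F y z" if "x \<le> y" for x y z using mf that unfolding monotone_flux_def by blast
  have m2: "F x z \<le> F x y" if "y \<le> z" for x y z using mf that unfolding monotone_flux_def by blast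
  have cons: "F s s = f s" for s using mf unfolding monotone_flux_def by blast
  show ?thesis
  proof (cases "u \<le> v")
    case True
    have "integral {u..v} (\<lambda>s. F u v) \<le> integral {u..v} f"
    proof (rule integral_le[OF integrable_const_ivl fi])
      fix s assume s: "s \<in> {u..v}"
      have "F u v \<le> F u s" using m2[of s v u] s by simp
      also have "\<dots> \<le> F s s" using m1[of u s s] s by simp
      finally show "F u v \<le> f s" using cons by simp
    qed
    then show ?thesis using True by (simp add: oriented_integral_eq_integral algebra_simps)
  next
    case False
    have "integral {v..u} f \<le> integral {v..u} (\<lambda>s. F u v)"
    proof (rule integral_le[OF fi integrable_const_ivl])
      fix s assume s: "s \<in> {v..u}"
      have "f s = F s s" using cons by simp
      also have "\<dots> \<le> F u s" using m1[of s u s] s by simp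
      also have "\<dots> \<le> F u v" using m2[of v s u] s by simp
      finally show "f s \<le> F u v" .
    qed
    then show ?thesis using False by (simp add: oriented_integral_eq_minus_integral algebra_simps)
  qed
qed

lemma integral_comp_poly_mult_deriv:
  fixes f :: "real \<Rightarrow> real" and p :: "real poly" and c d :: real
  assumes fc: "continuous_on UNIV f" and cd: "c \<le> d"
  shows "integral {c..d} (\<lambda>y. f (poly p y) * poly (pderiv p) y) = oriented_integral f (poly p c) (poly p d)"
proof -
  have "bounded (poly p ` {c..d})"
    by (intro compact_imp_bounded compact_continuous_image continuous_intros) auto
  then obtain B where B0: "\<forall>y\<in>{c..d}. \<bar>poly p y\<bar> \<le> B" unfolding bounded_real by auto
  then have B: "\<And>y. y \<in> {c..d} \<Longrightarrow> \<bar>poly p y\<bar> \<le> B" by blast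
  have "((\<lambda>x. poly (pderiv p) x *\<^sub>R f (poly p x)) has_integral
        (integral {poly p c..poly p d} f - integral {poly p d..poly p c} f)) {c..d}"
  proof (rule has_integral_substitution_general[where s="{}" and c="-B" and d=B, OF _ cd])
    show "poly p ` {c..d} \<subseteq> {- B..B}" using B by (force simp: abs_le_iff)
    show "continuous_on {- B..B} f" using fc by (rule continuous_on_subset) simp
    show "continuous_on {c..d} (poly p)" using continuous_on_poly[OF continuous_on_id[of "{c..d}"], of p] by simp
  qed (auto intro: poly_DERIV DERIV_subset)
  then show ?thesis unfolding oriented_integral_def by (simp add: integral_unique mult.commute)
qed

lemma integral_poly_by_parts:
  fixes c d :: real and q u :: "real poly"
  assumes cd: "c \<le> d"
  shows "integral {c..d} (\<lambda>y. poly q y * poly (pderiv u) y) + integral {c..d} (\<lambda>y. poly u y * poly (pderiv q) y)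
       = poly u d * poly q d - poly u c * poly q c"
proof -
  have "((\<lambda>y. poly q y * poly (pderiv u) y + poly u y * poly (pderiv q) y) has_integral
          (poly u d * poly q d - poly u c * poly q c)) {c..d}"
  proof (rule fundamental_theorem_of_calculus[OF cd])
    fix x assume "x \<in> {c..d}"
    have "((\<lambda>y. poly u y * poly q y) has_real_derivative (poly (pderiv u) x * poly q x + poly u x * poly (pderiv q) x)) (at x within {c..d})"
      by (intro derivative_eq_intros poly_DERIV[THEN DERIV_subset]) auto
    then show "((\<lambda>y. poly u y * poly q y) has_vector_derivative (poly q x * poly (pderiv u) x + poly u x * poly (pderiv q) x)) (at x within {c..d})"
      by (simp add: has_real_derivative_iff_has_vector_derivative mult.commute)
  qed
  then have "integral {c..d} (\<lambda>y. poly q y * poly (pderiv u) y + poly u y * poly (pderiv q) y) = poly u d * poly q d - poly u c * poly q c"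
    by (rule integral_unique)
  moreover have "integral {c..d} (\<lambda>y. poly q y * poly (pderiv u) y + poly u y * poly (pderiv q) y) =
     integral {c..d} (\<lambda>y. poly q y * poly (pderiv u) y) + integral {c..d} (\<lambda>y. poly u y * poly (pderiv q) y)"
    by (rule integral_add) (auto intro!: integrable_continuous_real continuous_intros)
  ultimately show ?thesis by simp
qed

lemma sum_cells_regroup_nodes:
  fixes R L :: "nat \<Rightarrow> real"
  assumes "K \<ge> 1"
  shows "(\<Sum>i=1..K. R i - L i) = R K - L 1 + (\<Sum>j\<in>{1..<K}. R j - L (Suc j))"
  using assms
proof (induction K)
  case 0 then show ?case by simp
next
  case (Suc K)
  show ?case
  proof (cases "K = 0")
    case True then show ?thesis by simp
  next
    case False
    then have "(\<Sum>i=1..K. R i - L i) = R K - L 1 + (\<Sum>j\<in>{1..<K}. R j - L (Suc j))" using Suc by simp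
    moreover have "{1..<Suc K} = insert K {1..<K}" using False by auto
    ultimately show ?thesis by simp
  qed
qed

lemma L2_projection_le:
  fixes u0 :: "real \<Rightarrow> real" and p :: "real poly" and a b c d :: real
  assumes um: "u0 measurable_on {a..b}" and ui: "(\<lambda>y. (u0 y)\<^sup>2) integrable_on {a..b}"
    and sub: "{c..d} \<subseteq> {a..b}" and cd: "c \<le> d"
    and eq: "integral {c..d} (\<lambda>y. poly p y * poly p y) = integral {c..d} (\<lambda>y. u0 y * poly p y)"
  shows "integral {c..d} (\<lambda>y. (poly p y)\<^sup>2) \<le> integral {c..d} (\<lambda>y. (u0 y)\<^sup>2)"
proof -
  have ui': "(\<lambda>y. (u0 y)\<^sup>2) integrable_on {c..d}" using ui sub cd
    by (meson integrable_on_subinterval atLeastatMost_subset_iff)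
  have pi: "(\<lambda>y. (poly p y)\<^sup>2) integrable_on {c..d}" by (intro integrable_continuous_real continuous_intros)
  have um': "u0 \<in> borel_measurable (lebesgue_on {c..d})"
  proof -
    have "u0 \<in> borel_measurable (lebesgue_on {a..b})"
      using um measurable_on_iff_borel_measurable[of "{a..b}" u0] by simp
    then show ?thesis by (rule measurable_restrict_mono[OF _ sub])
  qed
  have pm: "poly p \<in> borel_measurable (lebesgue_on {c..d})"
    by (rule continuous_imp_measurable_on_sets_lebesgue) (auto intro: continuous_on_poly[OF continuous_on_id, simplified])
  have abs_mult_le: "\<bar>x * y\<bar> \<le> x\<^sup>2 + y\<^sup>2" for x y :: real
  proof -
    have "0 \<le> \<bar>x\<bar> * \<bar>y\<bar>" "2 * (\<bar>x\<bar> * \<bar>y\<bar>) \<le> x\<^sup>2 + y\<^sup>2"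
      using sum_squares_bound[of "\<bar>x\<bar>" "\<bar>y\<bar>"] by (simp_all add: mult.assoc)
    then show ?thesis unfolding abs_mult by linarith
  qed
  have upi: "(\<lambda>y. u0 y * poly p y) integrable_on {c..d}"
  proof (rule measurable_bounded_by_integrable_imp_integrable[where g="\<lambda>y. (u0 y)\<^sup>2 + (poly p y)\<^sup>2"])
    show "(\<lambda>y. u0 y * poly p y) \<in> borel_measurable (lebesgue_on {c..d})"
      using um' pm by (rule borel_measurable_times)
    show "(\<lambda>y. (u0 y)\<^sup>2 + (poly p y)\<^sup>2) integrable_on {c..d}" using ui' pi by (rule integrable_add)
  qed (auto simp: abs_mult_le)
  have "0 \<le> integral {c..d} (\<lambda>y. (u0 y)\<^sup>2 - 2 * (u0 y * poly p y) + (poly p y)\<^sup>2)"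
  proof (rule Henstock_Kurzweil_Integration.integral_nonneg)
    show "(\<lambda>y. (u0 y)\<^sup>2 - 2 * (u0 y * poly p y) + (poly p y)\<^sup>2) integrable_on {c..d}"
      by (intro integrable_add integrable_diff integrable_on_mult_right ui' upi pi)
    fix y
    have "0 \<le> (u0 y - poly p y)\<^sup>2" by simp
    then show "0 \<le> (u0 y)\<^sup>2 - 2 * (u0 y * poly p y) + (poly p y)\<^sup>2" by (simp add: power2_diff)
  qed
  also have "\<dots> = integral {c..d} (\<lambda>y. (u0 y)\<^sup>2) - 2 * integral {c..d} (\<lambda>y. u0 y * poly p y) + integral {c..d} (\<lambda>y. (poly p y)\<^sup>2)"
    by (subst integral_add, intro integrable_diff integrable_on_mult_right ui' upi pi, rule pi,
        subst integral_diff, rule ui', intro integrable_on_mult_right upi, simp)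
  finally show ?thesis using eq by (simp add: power2_eq_square)
qed

text \<open>The contribution of one side of a node to \<open>(\<partial>\<^sub>tu\<^sub>h, u\<^sub>h)\<close> after testing the scheme with
  \<open>u\<^sub>h\<close>, \<open>p\<^sub>h\<close>, \<open>q\<^sub>h\<close>; \<open>J\<close> is a primitive of \<open>f\<close>, the other arguments are the numerical
  fluxes and the one-sided traces of \<open>u\<^sub>h\<close> and \<open>q\<^sub>h\<close>.\<close>
definition ldg_trace :: "(real \<Rightarrow> real) \<Rightarrow> real \<Rightarrow> real \<Rightarrow> real \<Rightarrow> real \<Rightarrow> real \<Rightarrow> real \<Rightarrow> real" where
  "ldg_trace J s fh qh uh u q = J u - (fh - s * qh) * u - s * u * q + s * uh * q"

lemma ldg_cell_energy_identity:
  fixes f :: "real \<Rightarrow> real" and u ut p q :: "real poly"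
    and c d s D fL fR qL qR uL uR :: real
  assumes fc: "continuous_on UNIV f" and cd: "c \<le> d"
    and u_eq: "integral {c..d} (\<lambda>y. poly ut y * poly u y)
        + ((fR - s * qR) * poly u d - (fL - s * qL) * poly u c)
        - integral {c..d} (\<lambda>y. (f (poly u y) - s * poly q y) * poly (pderiv u) y) = 0"
    and q_eq: "integral {c..d} (\<lambda>y. poly q y * poly p y) = D"
    and p_eq: "integral {c..d} (\<lambda>y. poly p y * poly q y) - s * (uR * poly q d - uL * poly q c)
        + s * integral {c..d} (\<lambda>y. poly u y * poly (pderiv q) y) = 0"
  shows "integral {c..d} (\<lambda>y. poly ut y * poly u y)
    = - D + ldg_trace (oriented_integral f 0) s fR qR uR (poly u d) (poly q d)
          - ldg_trace (oriented_integral f 0) s fL qL uL (poly u c) (poly q c)"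
proof -
  define J where "J = oriented_integral f 0"
  define Iu where "Iu = integral {c..d} (\<lambda>y. poly q y * poly (pderiv u) y)"
  define Iq where "Iq = integral {c..d} (\<lambda>y. poly u y * poly (pderiv q) y)"
  have flux_term: "integral {c..d} (\<lambda>y. (f (poly u y) - s * poly q y) * poly (pderiv u) y)
      = J (poly u d) - J (poly u c) - s * Iu"
  proof -
    have "integral {c..d} (\<lambda>y. (f (poly u y) - s * poly q y) * poly (pderiv u) y)
      = integral {c..d} (\<lambda>y. f (poly u y) * poly (pderiv u) y - s * (poly q y * poly (pderiv u) y))"
      by (rule integral_cong) (simp add: algebra_simps)
    also have "\<dots> = integral {c..d} (\<lambda>y. f (poly u y) * poly (pderiv u) y) - s * Iu"
      unfolding Iu_def
      by (subst integral_diff)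
         (auto intro!: integrable_continuous_real continuous_intros continuous_on_compose2[OF fc])
    finally show ?thesis
      using integral_comp_poly_mult_deriv[OF fc cd, of u] oriented_integral_diff[OF fc, of "poly u c" "poly u d"]
      by (simp add: J_def)
  qed
  have by_parts: "Iu + Iq = poly u d * poly q d - poly u c * poly q c"
    unfolding Iu_def Iq_def by (rule integral_poly_by_parts[OF cd])
  have "integral {c..d} (\<lambda>y. poly p y * poly q y) = D"
    using q_eq by (simp add: mult.commute)
  then have p_eq': "D - s * (uR * poly q d - uL * poly q c) + s * Iq = 0"
    using p_eq unfolding Iq_def by simp
  have "integral {c..d} (\<lambda>y. poly ut y * poly u y)
      = (fL - s * qL) * poly u c - (fR - s * qR) * poly u d + J (poly u d) - J (poly u c) - s * Iu"
    using u_eq flux_term by simp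
  then show ?thesis
    using p_eq' arg_cong[OF by_parts, of "\<lambda>x. s * x"] unfolding ldg_trace_def J_def[symmetric]
    by (simp add: algebra_simps)
qed

text \<open>Regrouped by nodes, the traces give one monotone-flux dissipation term per interior node
  and one at each end of the interval; the penalty \<open>\<beta>/h\<close> only enters at the right end.\<close>
lemma ldg_trace_sum_nonpos:
  fixes U Q :: "nat \<Rightarrow> real poly" and s \<beta> h :: real
  assumes mf: "monotone_flux F f" and fc: "continuous_on UNIV f" and K: "K \<ge> 1"
    and s: "0 \<le> s" and penalty: "0 \<le> \<beta> / h"
  defines "J \<equiv> oriented_integral f 0"
  shows "(\<Sum>i=1..K.
      ldg_trace J s (fhat F xn K U i) (qhat xn K \<beta> h U Q i) (uhat xn K U i) (poly (U i) (xn i)) (poly (Q i) (xn i))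
    - ldg_trace J s (fhat F xn K U (i-1)) (qhat xn K \<beta> h U Q (i-1)) (uhat xn K U (i-1))
        (poly (U i) (xn (i-1))) (poly (Q i) (xn (i-1)))) \<le> 0"
proof -
  define R where "R i = ldg_trace J s (fhat F xn K U i) (qhat xn K \<beta> h U Q i) (uhat xn K U i)
    (poly (U i) (xn i)) (poly (Q i) (xn i))" for i
  define L where "L i = ldg_trace J s (fhat F xn K U (i-1)) (qhat xn K \<beta> h U Q (i-1)) (uhat xn K U (i-1))
    (poly (U i) (xn (i-1))) (poly (Q i) (xn (i-1)))" for i
  have J_diff: "oriented_integral f p q = J q - J p" for p q
    unfolding J_def by (rule oriented_integral_diff[OF fc])
  have right_end: "R K \<le> 0"
  proof -
    define u where "u = poly (U K) (xn K)"
    have "0 \<le> F u 0 * (u - 0) + oriented_integral f u 0" by (rule monotone_flux_dissipation[OF mf fc])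
    moreover have "0 \<le> s * (\<beta> / h) * (u * u)"
      by (rule mult_nonneg_nonneg[OF mult_nonneg_nonneg[OF s penalty]]) simp
    moreover have "J 0 = 0" by (simp add: J_def oriented_integral_def)
    ultimately show ?thesis
      using K J_diff[of u 0] unfolding R_def ldg_trace_def
      by (simp add: fhat_def qhat_def uhat_def u_def[symmetric] algebra_simps)
  qed
  have left_end: "0 \<le> L 1"
  proof -
    define u where "u = poly (U (Suc 0)) (xn 0)"
    have "0 \<le> F 0 u * (0 - u) + oriented_integral f 0 u" by (rule monotone_flux_dissipation[OF mf fc])
    then show ?thesis
      unfolding L_def ldg_trace_def J_def by (simp add: fhat_def qhat_def uhat_def u_def[symmetric] algebra_simps)
  qed
  have interior: "R j - L (Suc j) \<le> 0" if j: "j \<in> {1..<K}" for j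
  proof -
    define um where "um = poly (U j) (xn j)"
    define up where "up = poly (U (Suc j)) (xn j)"
    have "0 \<le> F um up * (um - up) + oriented_integral f um up" by (rule monotone_flux_dissipation[OF mf fc])
    moreover have "R j - L (Suc j) = - (F um up * (um - up) + (J up - J um))"
      unfolding R_def L_def ldg_trace_def using j
      by (simp add: fhat_def qhat_def uhat_def um_def[symmetric] up_def[symmetric] algebra_simps)
    ultimately show ?thesis using J_diff[of um up] by simp
  qed
  have "(\<Sum>j\<in>{1..<K}. R j - L (Suc j)) \<le> 0" by (rule sum_nonpos) (use interior in auto)
  then show ?thesis
    using sum_cells_regroup_nodes[OF K, of R L] right_end left_end by (simp add: R_def L_def)
qed

definition cell_energy :: "(nat \<Rightarrow> real) \<Rightarrow> nat \<Rightarrow> (nat \<Rightarrow> real poly) \<Rightarrow> real" where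
  "cell_energy xn K P = (\<Sum>i=1..K. integral {xn (i-1)..xn i} (\<lambda>y. (poly (P i) y)\<^sup>2))"

lemma mesh_cell_subset:
  assumes m: "mesh a b K xn" and i: "i \<in> {1..K}"
  shows "{xn (i-1)..xn i} \<subseteq> {a..b}"
proof -
  have "xn 0 \<le> xn (i-1)" "xn i \<le> xn K" using mesh_mono[OF m] i by auto
  then show ?thesis using m unfolding mesh_def by auto
qed

lemma mesh_size_pos:
  assumes m: "mesh a b K xn"
  shows "0 < mesh_size K xn"
proof -
  have K: "1 \<le> K" and cells: "\<forall>i\<in>{1..K}. xn (i-1) < xn i" using m unfolding mesh_def by auto
  then have "xn (1-1) < xn 1" using bspec[OF cells, of 1] by simp
  moreover have "xn 1 - xn (1-1) \<le> mesh_size K xn"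
    unfolding mesh_size_def using K by (intro Max_ge) (auto intro!: image_eqI[where x=1])
  ultimately show ?thesis by simp
qed

lemma integral_pw_square:
  assumes m: "mesh a b K xn"
  shows "integral {a..b} (\<lambda>y. (pw xn K P y)\<^sup>2) = cell_energy xn K P"
proof -
  have eq: "integral {xn (i-1)..xn i} (\<lambda>y. (pw xn K P y)\<^sup>2) = integral {xn (i-1)..xn i} (\<lambda>y. (poly (P i) y)\<^sup>2)"
    and int: "(\<lambda>y. (pw xn K P y)\<^sup>2) integrable_on {xn (i-1)..xn i}"
    if i: "i \<in> {1..K}" for i
  proof -
    have spike: "(poly (P i) y)\<^sup>2 = (pw xn K P y)\<^sup>2" if "y \<in> {xn (i-1)..xn i} - {xn i}" for y
      using pw_eq_cell_poly[OF m i, of y] that by auto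
    show "integral {xn (i-1)..xn i} (\<lambda>y. (pw xn K P y)\<^sup>2) = integral {xn (i-1)..xn i} (\<lambda>y. (poly (P i) y)\<^sup>2)"
      by (rule integral_spike[OF negligible_sing spike])
    show "(\<lambda>y. (pw xn K P y)\<^sup>2) integrable_on {xn (i-1)..xn i}"
    proof (rule integrable_spike_finite[of "{xn i}"])
      show "(\<lambda>y. (poly (P i) y)\<^sup>2) integrable_on {xn (i-1)..xn i}"
        by (intro integrable_continuous_real continuous_intros)
    qed (simp_all add: spike)
  qed
  show ?thesis
    unfolding cell_energy_def using integral_sum_cells(2)[OF m int, symmetric] eq by simp
qed

lemma sum_cells_frac_op_form_nonneg:
  assumes ab: "a < b" and a1: "1 < \<alpha>" and a2: "\<alpha> < 2" and m: "mesh a b K xn"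
  shows "0 \<le> (\<Sum>i=1..K. cell_ip xn i (frac_op \<alpha> a b (pw xn K P)) (poly (P i)))"
proof -
  define g where "g = pw xn K P"
  obtain M where M: "\<And>y. \<bar>g y\<bar> \<le> M" using pw_bounded[OF m, of P] unfolding g_def by blast
  have gc: "isCont g x" if "x \<in> {a<..<b} - xn ` {0..K}" for x
    using isCont_pw[OF m that] unfolding g_def .
  note form = frac_op_form_nonneg[OF ab a1 a2 pw_measurable[of xn K P, folded g_def] M finite_imageI[OF finite_atLeastAtMost] gc]
  have cell: "cell_ip xn i (frac_op \<alpha> a b g) (poly (P i)) = integral {xn (i-1)..xn i} (\<lambda>y. frac_op \<alpha> a b g y * g y)"
    if i: "i \<in> {1..K}" for i
    unfolding cell_ip_def
    by (rule integral_spike[OF negligible_sing[of "xn i"]]) (use pw_eq_cell_poly[OF m i] in \<open>auto simp: g_def\<close>)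
  have "(\<Sum>i=1..K. cell_ip xn i (frac_op \<alpha> a b g) (poly (P i)))
      = (\<Sum>i=1..K. integral {xn (i-1)..xn i} (\<lambda>y. frac_op \<alpha> a b g y * g y))"
    by (rule sum.cong) (simp_all add: cell)
  also have "\<dots> = integral {a..b} (\<lambda>y. frac_op \<alpha> a b g y * g y)"
    by (rule integral_sum_cells(2)[OF m integrable_subinterval_real[OF form(1) mesh_cell_subset[OF m]]])
  finally show ?thesis using form(2) by (simp add: g_def)
qed

lemma ldg_energy_has_derivative:
  assumes ldg: "ldg_solution a b \<alpha> \<epsilon> \<beta> f F u0 K xn k T U Ut P Q"
    and m: "mesh a b K xn" and t: "t \<in> {0..T}"
  shows "((\<lambda>\<tau>. cell_energy xn K (U \<tau>)) has_real_derivative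
           (\<Sum>i=1..K. 2 * cell_ip xn i (poly (Ut t i)) (poly (U t i)))) (at t within {0..T})"
proof -
  note deg = ldg[unfolded ldg_solution_def Let_def, THEN conjunct1, rule_format]
  note der = ldg[unfolded ldg_solution_def Let_def, THEN conjunct2, THEN conjunct1, rule_format]
  show ?thesis
    unfolding cell_energy_def cell_ip_def
  proof (intro DERIV_sum has_real_derivative_integral_poly_square[OF _ t])
    fix i assume i: "i \<in> {1..K}"
    show "xn (i-1) < xn i" using m i unfolding mesh_def by blast
    show "degree (U \<tau> i) \<le> k" if "\<tau> \<in> {0..T}" for \<tau> using deg[OF that i] by blast
    show "degree (Ut t i) \<le> k" using deg[OF t i] by blast
    show "((\<lambda>\<tau>. poly (U \<tau> i) y) has_real_derivative poly (Ut t i) y) (at t within {0..T})"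
      if "y \<in> {xn (i - 1)..xn i}" for y using der[OF t i that] .
  qed
qed

lemma ldg_energy_rate_nonpos:
  assumes ab: "a < b" and a1: "1 < \<alpha>" and a2: "\<alpha> < 2" and eps: "\<epsilon> > 0" and bet: "\<beta> > 0"
    and fc: "continuous_on UNIV f" and m: "mesh a b K xn" and mf: "monotone_flux F f"
    and ldg: "ldg_solution a b \<alpha> \<epsilon> \<beta> f F u0 K xn k T U Ut P Q" and t: "t \<in> {0..T}"
  shows "(\<Sum>i=1..K. cell_ip xn i (poly (Ut t i)) (poly (U t i))) \<le> 0"
proof -
  define h where "h = mesh_size K xn"
  define s where "s = sqrt \<epsilon>"
  define J where "J = oriented_integral f 0"
  define D where "D i = cell_ip xn i (frac_op \<alpha> a b (pw xn K (P t))) (poly (P t i))" for i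
  define R where "R i = ldg_trace J s (fhat F xn K (U t) i) (qhat xn K \<beta> h (U t) (Q t) i) (uhat xn K (U t) i)
    (poly (U t i) (xn i)) (poly (Q t i) (xn i))" for i
  define L where "L i = ldg_trace J s (fhat F xn K (U t) (i-1)) (qhat xn K \<beta> h (U t) (Q t) (i-1)) (uhat xn K (U t) (i-1))
    (poly (U t i) (xn (i-1))) (poly (Q t i) (xn (i-1)))" for i
  note deg = ldg[unfolded ldg_solution_def Let_def, THEN conjunct1, rule_format]
  note scheme = ldg[unfolded ldg_solution_def Let_def h_def[symmetric] s_def[symmetric],
      THEN conjunct2, THEN conjunct2, THEN conjunct1, rule_format]
  have cell: "cell_ip xn i (poly (Ut t i)) (poly (U t i)) = - D i + R i - L i" if i: "i \<in> {1..K}" for i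
  proof -
    have "degree (U t i) \<le> k" "degree (P t i) \<le> k" "degree (Q t i) \<le> k" using deg[OF t i] by auto
    note eqs = scheme[OF t i this]
    have "xn (i-1) \<le> xn i" using m i unfolding mesh_def by fastforce
    from ldg_cell_energy_identity[OF fc this eqs[THEN conjunct1, unfolded cell_ip_def]
        eqs[THEN conjunct2, THEN conjunct1, unfolded cell_ip_def right_minus_eq]
        eqs[THEN conjunct2, THEN conjunct2, unfolded cell_ip_def]]
    show ?thesis unfolding D_def R_def L_def J_def cell_ip_def by simp
  qed
  have "(\<Sum>i=1..K. cell_ip xn i (poly (Ut t i)) (poly (U t i))) = - (\<Sum>i=1..K. D i) + (\<Sum>i=1..K. R i - L i)"
    using cell by (simp add: sum.distrib sum_subtractf sum_negf)
  moreover have "0 \<le> (\<Sum>i=1..K. D i)"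
    unfolding D_def by (rule sum_cells_frac_op_form_nonneg[OF ab a1 a2 m])
  moreover have "(\<Sum>i=1..K. R i - L i) \<le> 0"
    unfolding R_def L_def J_def
  proof (rule ldg_trace_sum_nonpos[OF mf fc])
    show "1 \<le> K" using m unfolding mesh_def by simp
    show "0 \<le> s" using eps by (simp add: s_def)
    show "0 \<le> \<beta> / h" using bet mesh_size_pos[OF m] by (simp add: h_def)
  qed
  ultimately show ?thesis by simp
qed

lemma ldg_energy_antimono:
  assumes ab: "a < b" and a1: "1 < \<alpha>" and a2: "\<alpha> < 2" and eps: "\<epsilon> > 0" and bet: "\<beta> > 0"
    and fc: "continuous_on UNIV f" and m: "mesh a b K xn" and mf: "monotone_flux F f"
    and ldg: "ldg_solution a b \<alpha> \<epsilon> \<beta> f F u0 K xn k T U Ut P Q" and T: "0 \<le> T"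
  shows "cell_energy xn K (U T) \<le> cell_energy xn K (U 0)"
proof (rule DERIV_nonpos_imp_decreasing_open[OF T])
  show "continuous_on {0..T} (\<lambda>\<tau>. cell_energy xn K (U \<tau>))"
    using ldg_energy_has_derivative[OF ldg m] by (rule DERIV_continuous_on)
  fix t assume t: "0 < t" "t < T"
  then have "((\<lambda>\<tau>. cell_energy xn K (U \<tau>)) has_real_derivative
      (\<Sum>i=1..K. 2 * cell_ip xn i (poly (Ut t i)) (poly (U t i)))) (at t)"
    using ldg_energy_has_derivative[OF ldg m, of t] by (simp add: at_within_Icc_at)
  moreover have "(\<Sum>i=1..K. 2 * cell_ip xn i (poly (Ut t i)) (poly (U t i))) \<le> 0"
    using ldg_energy_rate_nonpos[OF assms(1-9), of t] t by (simp add: sum_distrib_left[symmetric])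
  ultimately show "\<exists>y. ((\<lambda>\<tau>. cell_energy xn K (U \<tau>)) has_real_derivative y) (at t) \<and> y \<le> 0"
    by blast
qed

lemma ldg_initial_energy_le:
  assumes um: "u0 measurable_on {a..b}" and ui: "(\<lambda>y. (u0 y)\<^sup>2) integrable_on {a..b}"
    and m: "mesh a b K xn" and T: "0 \<le> T"
    and ldg: "ldg_solution a b \<alpha> \<epsilon> \<beta> f F u0 K xn k T U Ut P Q"
  shows "cell_energy xn K (U 0) \<le> integral {a..b} (\<lambda>y. (u0 y)\<^sup>2)"
proof -
  note deg = ldg[unfolded ldg_solution_def Let_def, THEN conjunct1, rule_format]
  note init = ldg[unfolded ldg_solution_def Let_def, THEN conjunct2, THEN conjunct2, THEN conjunct2, rule_format]
  have "cell_energy xn K (U 0) \<le> (\<Sum>i=1..K. integral {xn (i-1)..xn i} (\<lambda>y. (u0 y)\<^sup>2))"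
    unfolding cell_energy_def
  proof (rule sum_mono)
    fix i assume i: "i \<in> {1..K}"
    have "degree (U 0 i) \<le> k" using deg[of 0 i] i T by auto
    moreover have "xn (i-1) \<le> xn i" using m i unfolding mesh_def by fastforce
    ultimately show "integral {xn (i-1)..xn i} (\<lambda>y. (poly (U 0 i) y)\<^sup>2) \<le> integral {xn (i-1)..xn i} (\<lambda>y. (u0 y)\<^sup>2)"
      using init[OF i] by (intro L2_projection_le[OF um ui mesh_cell_subset[OF m i]]) (auto simp: cell_ip_def)
  qed
  also have "\<dots> = integral {a..b} (\<lambda>y. (u0 y)\<^sup>2)"
    by (rule integral_sum_cells(2)[OF m integrable_subinterval_real[OF ui mesh_cell_subset[OF m]]])
  finally show ?thesis .
qed

theorem theorem4p2:
  fixes a b \<alpha> \<epsilon> \<beta> T :: real and f u0 :: "real \<Rightarrow> real" and F :: "real \<Rightarrow> real \<Rightarrow> real"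
    and K k :: nat and xn :: "nat \<Rightarrow> real"
    and U Ut P Q :: "real \<Rightarrow> nat \<Rightarrow> real poly"
  assumes "a < b"
    and "1 < \<alpha>" and "\<alpha> < 2" and "\<epsilon> > 0" and "\<beta> > 0"
    and "\<exists>L. L-lipschitz_on UNIV f"
    and "u0 measurable_on {a..b}" and "(\<lambda>y. (u0 y)\<^sup>2) integrable_on {a..b}"
    and "mesh a b K xn"
    and "monotone_flux F f"
    and "T > 0"
    and "ldg_solution a b \<alpha> \<epsilon> \<beta> f F u0 K xn k T U Ut P Q"
  shows "sqrt (integral {a..b} (\<lambda>y. (pw xn K (U T) y)\<^sup>2)) \<le> sqrt (integral {a..b} (\<lambda>y. (u0 y)\<^sup>2))"
proof -
  have fc: "continuous_on UNIV f" using assms(6) lipschitz_on_continuous_on by blast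
  have T: "0 \<le> T" using assms(11) by simp
  have "integral {a..b} (\<lambda>y. (pw xn K (U T) y)\<^sup>2) = cell_energy xn K (U T)"
    by (rule integral_pw_square[OF assms(9)])
  also have "\<dots> \<le> cell_energy xn K (U 0)"
    by (rule ldg_energy_antimono[OF assms(1-5) fc assms(9,10,12) T])
  also have "\<dots> \<le> integral {a..b} (\<lambda>y. (u0 y)\<^sup>2)"
    by (rule ldg_initial_energy_le[OF assms(7-9) T assms(12)])
  finally show ?thesis by (rule real_sqrt_le_mono)
qed

end
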